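(* With probability $1/2$, the sublinear perceptron returns a solution $\bar{x}$ that is an $\varepsilon$-approximation.
   Context: The sublinear perceptron is the following algorithm. Input: $\varepsilon>0$ and a matrix $A \in \mathbb{R}^{n \times d}$ whose rows $A_i$ all lie in the Euclidean unit ball $\mathbb{B}\subset\mathbb{R}^d$. Set $T \gets 200^2 \varepsilon^{-2}\log n$, $y_1 \gets 0$, $w_1 \gets \mathbf{1}_n$ (the all-ones $n$-vector), $\eta\gets \frac{1}{100} \sqrt{\frac{\log n}{T}}$. For $t=1,\dots,T$: let $p_t \gets w_t/\|w_t\|_1$ and $x_t \gets y_t/\max\{1,\|y_t\|\}$; choose $i_t\in[n]$ with probability $p_t(i)$; set $y_{t+1} \gets y_t + \frac{1}{\sqrt{2T}} A_{i_t}$; choose $j_t\in[d]$ with probability $x_t(j)^2/\|x_t\|^2$; for each $i\in[n]$ set $\tilde v_t(i) \gets A_i(j_t)\|x_t\|^2/x_t(j_t)$, $v_t(i) \gets \mathrm{clip}(\tilde v_t(i), 1/\eta)$ where $\mathrm{clip}(z,V)=\min\{V,\max\{-V,z\}\}$, and $w_{t+1}(i) \gets w_t(i)(1-\eta v_t(i)+\eta^2 v_t(i)^2)$. Return $\bar{x} = \frac{1}{T}\sum_t x_t$. A vector $x_\varepsilon\in\mathbb{B}$ is an $\varepsilon$-approximate solution if for all $i'$, $A_{i'} x_\varepsilon \geq \max_{x\in\mathbb{B}} \min_i A_i x - \varepsilon$. *)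

theory Defs
  imports "HOL-Probability.Probability"
begin

text \<open>Rows of A are indexed by the finite type 'n (so n = CARD('n)),
columns by the finite type 'd (so d = CARD('d)).\<close>

definition clip :: "real \<Rightarrow> real \<Rightarrow> real" where
  "clip z V = min V (max (- V) z)"

definition perc_T :: "real \<Rightarrow> nat \<Rightarrow> nat" where
  "perc_T \<epsilon> n = nat \<lceil>200^2 * \<epsilon> powr (-2) * ln (real n)\<rceil>"

definition perc_eta :: "real \<Rightarrow> nat \<Rightarrow> real" where
  "perc_eta \<epsilon> n = (1/100) * sqrt (ln (real n) / real (perc_T \<epsilon> n))"

definition row_dist :: "('n::finite \<Rightarrow> real) \<Rightarrow> 'n pmf" where
  "row_dist w = embed_pmf (\<lambda>i. w i / (\<Sum>k\<in>UNIV. \<bar>w k\<bar>))"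

text \<open>Distribution of the coordinate j with probability x(j)^2/||x||^2
 (when x = 0 this distribution is undefined in the paper; we then pick j uniformly,
 which is immaterial since the resulting estimate is 0/0 = 0).\<close>
definition col_dist :: "real^'d::finite \<Rightarrow> 'd pmf" where
  "col_dist x = (if x = 0 then pmf_of_set UNIV
                 else embed_pmf (\<lambda>j. (x $ j)^2 / (norm x)^2))"

text \<open>State: (y_t, w_t, sum of x_1..x_{t-1}).\<close>
type_synonym ('d, 'n) perc_state = "(real^'d) \<times> ('n \<Rightarrow> real) \<times> (real^'d)"

definition perc_step ::
  "real^'d::finite^'n::finite \<Rightarrow> real \<Rightarrow> nat \<Rightarrow> ('d,'n) perc_state \<Rightarrow> ('d,'n) perc_state pmf" where
  "perc_step A \<eta> T st =
     (let y = fst st; w = fst (snd st); s = snd (snd st);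
          x = (1 / max 1 (norm y)) *\<^sub>R y
      in bind_pmf (row_dist w) (\<lambda>i.
         bind_pmf (col_dist x) (\<lambda>j.
           (let v = (\<lambda>k. clip (A $ k $ j * (norm x)^2 / x $ j) (1 / \<eta>))
            in return_pmf (y + (1 / sqrt (2 * real T)) *\<^sub>R (A $ i),
                    (\<lambda>k. w k * (1 - \<eta> * v k + \<eta>^2 * (v k)^2)),
                    s + x)))))"

definition sublinear_perceptron :: "real \<Rightarrow> real^'d::finite^'n::finite \<Rightarrow> (real^'d) pmf" where
  "sublinear_perceptron \<epsilon> A =
     (let n = CARD('n); T = perc_T \<epsilon> n; \<eta> = perc_eta \<epsilon> n;
          init = return_pmf (0, (\<lambda>_. 1), 0)
      in map_pmf (\<lambda>st. (1 / real T) *\<^sub>R snd (snd st))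
           (((\<lambda>p. bind_pmf p (perc_step A \<eta> T)) ^^ T) init))"

definition perc_value :: "real^'d::finite^'n::finite \<Rightarrow> real" where
  "perc_value A = (SUP x\<in>cball 0 1. Min (range (\<lambda>i. A $ i \<bullet> x)))"

definition eps_approx_solution :: "real \<Rightarrow> real^'d::finite^'n::finite \<Rightarrow> real^'d \<Rightarrow> bool" where
  "eps_approx_solution \<epsilon> A x \<longleftrightarrow>
     x \<in> cball 0 1 \<and> (\<forall>i. A $ i \<bullet> x \<ge> perc_value A - \<epsilon>)"

end

theory Submission
  imports Defs
begin

text \<open>Run the algorithm on an augmented state that also records the cumulative estimates
  \<open>V\<^sub>k = \<Sum>\<^sub>t v\<^sub>t(k)\<close>, their means \<open>P = \<Sum>\<^sub>t p\<^sub>t \<bullet> v\<^sub>t\<close> and \<open>Q = \<Sum>\<^sub>t p\<^sub>t \<bullet> v\<^sub>t\<^sup>2\<close> under the row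
  weights, and the gains \<open>G = \<Sum>\<^sub>t A $ i\<^sub>t \<bullet> x\<^sub>t\<close>. Two deterministic regret bounds hold on every run:
  multiplicative weights give \<open>V\<^sub>k \<ge> P - \<eta> Q - ln n / \<eta>\<close>, and the lazily projected gradient steps,
  analysed through the Huber potential, give \<open>G \<ge> T (\<sigma> - \<epsilon>/50) - \<surd>(2T)\<close> where \<open>\<sigma>\<close> is the optimal
  margin. The estimates are clipped at \<open>1/\<eta>\<close>, have bias at most \<open>\<eta>\<close> and second moment at most 1,
  which makes
  \<open>\<Psi> = \<Sum>\<^sub>k exp (7\<eta> (V\<^sub>k - A\<^sub>k \<bullet> s) - a t) + n exp (7\<eta> (G - P) - a t) + n/10 (Q + T - t) / T\<close>
  a supermartingale for a suitable drift \<open>a = O(\<eta>\<^sup>2)\<close>. By Markov's inequality \<open>\<Psi>\<close> ends below twice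
  its initial value \<open>21n/10\<close> with probability at least \<open>1/2\<close>, which bounds \<open>V\<^sub>k - A\<^sub>k \<bullet> s\<close>,
  \<open>G - P\<close> and \<open>Q\<close>. Chaining these inequalities gives \<open>A\<^sub>k \<bullet> s \<ge> T (\<sigma> - \<epsilon>)\<close> for every row,
  where \<open>s = \<Sum>\<^sub>t x\<^sub>t\<close>, so the output \<open>s / T\<close> is an \<open>\<epsilon>\<close>-approximation. For \<open>\<epsilon> \<ge> 2\<close> every point
  of the unit ball is one.\<close>

section \<open>Elementary inequalities\<close>

lemma exp_le_one_plus_quad_nonpos:
  fixes z :: real assumes "z \<le> 0" shows "exp z \<le> 1 + z + z\<^sup>2"
proof -
  have "exp z * (1 - z) \<le> exp z * exp (-z)"
    using exp_ge_add_one_self[of "-z"] by (intro mult_left_mono) auto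
  also have "\<dots> = 1" by (simp add: exp_minus)
  also have "1 \<le> (1 + z + z\<^sup>2) * (1 - z)"
  proof -
    have "(1 + z + z\<^sup>2) * (1 - z) = 1 - z^3"
      by (simp add: algebra_simps power2_eq_square power3_eq_cube)
    moreover have "z^3 \<le> 0" using assms mult_nonneg_nonpos[of "z*z" z] by (simp add: power3_eq_cube)
    ultimately show ?thesis by simp
  qed
  finally show ?thesis using assms by simp
qed

lemma exp_71_div_10_le: "exp (71/10::real) \<le> 1230"
proof -
  have "exp (71/10::real) = exp 1 ^ 7 * exp (1/10)"
    by (simp add: exp_add[symmetric] exp_of_nat_mult[symmetric])
  also have "\<dots> \<le> (272/100) ^ 7 * (111/100)"
  proof (intro mult_mono power_mono)
    show "exp 1 \<le> (272/100::real)" using e_less_272 by simp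
    show "exp (1/10) \<le> (111/100::real)" using exp_bound[of "1/10"] by (simp add: power2_eq_square)
  qed auto
  also have "\<dots> \<le> 1230" by (simp add: power_divide)
  finally show ?thesis .
qed

text \<open>For positive \<open>z \<le> K = 71/10\<close> compare the exponential tails term by term:
  \<open>z\<^sup>n \<le> (z/K)\<^sup>2 K\<^sup>n\<close> for \<open>n \<ge> 2\<close>, and \<open>exp K - 1 - K \<le> 25 K\<^sup>2\<close>.\<close>

lemma exp_le_one_plus_quad:
  fixes z :: real assumes "z \<le> 71/10" shows "exp z \<le> 1 + z + 25 * z\<^sup>2"
proof (cases "z \<le> 0")
  case True
  then show ?thesis using exp_le_one_plus_quad_nonpos[of z] by (smt (verit) zero_le_power2)
next
  case False
  define K :: real where "K = 71/10"
  have z0: "0 \<le> z" using False by simp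
  have K0: "0 < K" by (simp add: K_def)
  have tail: "summable (\<lambda>n. inverse (fact (n + 2)) * r ^ (n + 2))" for r :: real
    using summable_exp[of r, THEN summable_ignore_initial_segment, of 2] by simp
  have "(\<Sum>n. inverse (fact (n + 2)) * z ^ (n + 2))
      \<le> (\<Sum>n. (z\<^sup>2 / K\<^sup>2) * (inverse (fact (n + 2)) * K ^ (n + 2)))"
  proof (intro suminf_le allI tail summable_mult)
    fix n
    have "z\<^sup>2 * z ^ n \<le> z\<^sup>2 * K ^ n"
      using z0 assms by (intro mult_left_mono power_mono) (auto simp: K_def)
    moreover have "z ^ (n + 2) = z\<^sup>2 * z ^ n"
      by (simp add: power_add mult.commute power2_eq_square)
    moreover have "(z\<^sup>2 / K\<^sup>2) * K ^ (n + 2) = z\<^sup>2 * K ^ n"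
      using K0 by (simp add: power_add power2_eq_square)
    ultimately have zK: "z ^ (n + 2) \<le> (z\<^sup>2 / K\<^sup>2) * K ^ (n + 2)" by linarith
    then show "inverse (fact (n + 2)) * z ^ (n + 2)
        \<le> (z\<^sup>2 / K\<^sup>2) * (inverse (fact (n + 2)) * K ^ (n + 2))"
      using mult_left_mono[OF zK, of "inverse (fact (n + 2))"] by (simp only: mult.left_commute) simp
  qed
  also have "\<dots> = (z\<^sup>2 / K\<^sup>2) * (exp K - 1 - K)"
    using suminf_mult[OF tail[of K], of "z\<^sup>2 / K\<^sup>2"] exp_first_two_terms[of K] by simp
  also have "\<dots> \<le> (z\<^sup>2 / K\<^sup>2) * (25 * K\<^sup>2)"
    using exp_71_div_10_le by (intro mult_left_mono) (auto simp: K_def power2_eq_square)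
  also have "\<dots> = 25 * z\<^sup>2" by (simp add: K_def)
  finally show ?thesis using exp_first_two_terms[of z] by simp
qed

lemma exp_minus_le_one_minus_plus_sq:
  fixes z :: real assumes "\<bar>z\<bar> \<le> 1" shows "exp (- z) \<le> 1 - z + z\<^sup>2"
proof (cases "z \<le> 0")
  case True then show ?thesis using exp_bound[of "-z"] assms by simp
next
  case False then show ?thesis using exp_le_one_plus_quad_nonpos[of "-z"] by simp
qed

lemma one_minus_plus_sq_pos: "0 < 1 - (z::real) + z\<^sup>2"
proof -
  have "1 - z + z\<^sup>2 = (z - 1/2)\<^sup>2 + 3/4" by (simp add: power2_eq_square algebra_simps)
  then show ?thesis by (metis add_nonneg_pos zero_le_power2 zero_less_divide_iff zero_less_numeral)
qed

lemma square_weighted_mean_le: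
  fixes p v :: "'a \<Rightarrow> real"
  assumes "finite S" "\<And>s. s \<in> S \<Longrightarrow> 0 \<le> p s" "(\<Sum>s\<in>S. p s) = 1"
  shows "(\<Sum>s\<in>S. p s * v s)\<^sup>2 \<le> (\<Sum>s\<in>S. p s * (v s)\<^sup>2)"
proof -
  define m where "m = (\<Sum>s\<in>S. p s * v s)"
  have "0 \<le> (\<Sum>s\<in>S. p s * (v s - m)\<^sup>2)" using assms by (intro sum_nonneg) auto
  also have "\<dots> = (\<Sum>s\<in>S. p s * (v s)\<^sup>2) - 2 * m * (\<Sum>s\<in>S. p s * v s) + m\<^sup>2 * (\<Sum>s\<in>S. p s)"
    by (simp add: power2_diff algebra_simps sum.distrib sum_subtractf sum_distrib_left sum_distrib_right)
  finally show ?thesis using assms(3) by (simp add: m_def power2_eq_square)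
qed

lemma square_diff_le: "(a - b)\<^sup>2 \<le> 2 * a\<^sup>2 + 2 * b\<^sup>2" for a b :: real
  using zero_le_power2[of "a + b"] by (simp add: power2_diff power2_sum)

lemma weighted_exp_le:
  fixes q X :: "'a \<Rightarrow> real"
  assumes "finite S" "\<And>s. s \<in> S \<Longrightarrow> 0 \<le> q s" "(\<Sum>s\<in>S. q s) = 1" "0 \<le> l"
    and "\<And>s. s \<in> S \<Longrightarrow> l * X s \<le> 71/10"
    and "(\<Sum>s\<in>S. q s * X s) \<le> b" "(\<Sum>s\<in>S. q s * (X s)\<^sup>2) \<le> 4"
  shows "(\<Sum>s\<in>S. q s * exp (l * X s)) \<le> exp (l * b + 100 * l\<^sup>2)"
proof -
  have "(\<Sum>s\<in>S. q s * exp (l * X s)) \<le> (\<Sum>s\<in>S. q s * (1 + l * X s + 25 * (l * X s)\<^sup>2))"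
    using assms by (intro sum_mono mult_left_mono exp_le_one_plus_quad) auto
  also have "\<dots> = (\<Sum>s\<in>S. q s) + l * (\<Sum>s\<in>S. q s * X s) + 25 * l\<^sup>2 * (\<Sum>s\<in>S. q s * (X s)\<^sup>2)"
    by (simp add: algebra_simps sum.distrib sum_distrib_left power_mult_distrib)
  also have "\<dots> \<le> 1 + l * b + 25 * l\<^sup>2 * 4"
    using assms by (intro add_mono mult_left_mono) auto
  also have "\<dots> \<le> exp (l * b + 100 * l\<^sup>2)"
    using exp_ge_add_one_self[of "l * b + 100 * l\<^sup>2"] by linarith
  finally show ?thesis .
qed

lemma sum_mult_sum_eq_sum_Times:
  fixes p :: "'a \<Rightarrow> real" and q :: "'b \<Rightarrow> real"
  shows "(\<Sum>i\<in>I. p i * (\<Sum>j\<in>J. q j * f i j))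
       = (\<Sum>z\<in>I \<times> J. p (fst z) * q (snd z) * f (fst z) (snd z))"
  by (simp add: sum.cartesian_product sum_distrib_left mult.assoc case_prod_beta)

lemma weighted_exp_le_two_stage:
  fixes p :: "'a \<Rightarrow> real" and q :: "'b \<Rightarrow> real"
  assumes "finite I" "finite J" "\<And>i. i \<in> I \<Longrightarrow> 0 \<le> p i" "\<And>j. j \<in> J \<Longrightarrow> 0 \<le> q j"
    and "(\<Sum>i\<in>I. p i) = 1" "(\<Sum>j\<in>J. q j) = 1" "0 \<le> l"
    and "\<And>i j. i \<in> I \<Longrightarrow> j \<in> J \<Longrightarrow> l * X i j \<le> 71/10"
    and "(\<Sum>i\<in>I. p i * (\<Sum>j\<in>J. q j * X i j)) \<le> b"
    and "(\<Sum>i\<in>I. p i * (\<Sum>j\<in>J. q j * (X i j)\<^sup>2)) \<le> 4"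
  shows "(\<Sum>i\<in>I. p i * (\<Sum>j\<in>J. q j * exp (l * X i j))) \<le> exp (l * b + 100 * l\<^sup>2)"
proof -
  have "(\<Sum>z\<in>I \<times> J. p (fst z) * q (snd z)) = 1"
    using sum_mult_sum_eq_sum_Times[where f="\<lambda>_ _. 1" and p=p and q=q and I=I and J=J] assms(5,6)
    by simp
  then show ?thesis
    using assms sum_mult_sum_eq_sum_Times[where f=X and p=p and q=q and I=I and J=J]
      sum_mult_sum_eq_sum_Times[where f="\<lambda>i j. (X i j)\<^sup>2" and p=p and q=q and I=I and J=J]
    unfolding sum_mult_sum_eq_sum_Times
    by (intro weighted_exp_le) (auto simp: mem_Times_iff)
qed

lemma sum_mult_sum_swap:
  fixes p :: "'a \<Rightarrow> real" and q :: "'b \<Rightarrow> real"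
  assumes "finite I" "finite J"
  shows "(\<Sum>j\<in>J. q j * (\<Sum>i\<in>I. p i * f j i)) = (\<Sum>i\<in>I. p i * (\<Sum>j\<in>J. q j * f j i))"
  by (simp add: sum_distrib_left mult.left_commute sum.swap[of _ J I])

lemma sum_mult_sum_diff:
  fixes p :: "'a \<Rightarrow> real" and q :: "'b \<Rightarrow> real"
  assumes "(\<Sum>i\<in>I. p i) = 1" "(\<Sum>j\<in>J. q j) = 1"
  shows "(\<Sum>i\<in>I. p i * (\<Sum>j\<in>J. q j * (f i - g j))) = (\<Sum>i\<in>I. p i * f i) - (\<Sum>j\<in>J. q j * g j)"
proof -
  have "(\<Sum>j\<in>J. q j * (f i - g j)) = f i * (\<Sum>j\<in>J. q j) - (\<Sum>j\<in>J. q j * g j)" for i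
    by (simp add: algebra_simps sum_subtractf sum_distrib_left)
  then have "(\<Sum>i\<in>I. p i * (\<Sum>j\<in>J. q j * (f i - g j)))
      = (\<Sum>i\<in>I. p i * f i) - (\<Sum>i\<in>I. p i) * (\<Sum>j\<in>J. q j * g j)"
    using assms(2) by (simp add: algebra_simps sum_subtractf sum_distrib_right)
  then show ?thesis using assms(1) by simp
qed

lemma sum_mult_sum_add:
  "(\<Sum>i\<in>I. p i * (\<Sum>j\<in>J. q j * (f i j + g i j)))
     = (\<Sum>i\<in>I. p i * (\<Sum>j\<in>J. q j * f i j)) + (\<Sum>i\<in>I. p i * (\<Sum>j\<in>J. q j * g i j))"
  for p :: "'a \<Rightarrow> real" and q :: "'b \<Rightarrow> real"
  by (simp add: distrib_left sum.distrib)

lemma sum_mult_sum_sum: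
  fixes p :: "'a \<Rightarrow> real" and q :: "'b \<Rightarrow> real"
  assumes "finite I" "finite J" "finite K"
  shows "(\<Sum>i\<in>I. p i * (\<Sum>j\<in>J. q j * (\<Sum>k\<in>K. f k i j)))
     = (\<Sum>k\<in>K. \<Sum>i\<in>I. p i * (\<Sum>j\<in>J. q j * f k i j))"
  using assms by (simp add: sum_distrib_left sum.swap[of _ J K] sum.swap[of _ I K])

lemma sum_mult_sum_const_add:
  fixes p :: "'a \<Rightarrow> real" and q :: "'b \<Rightarrow> real"
  assumes "(\<Sum>i\<in>I. p i) = 1" "(\<Sum>j\<in>J. q j) = 1"
  shows "(\<Sum>i\<in>I. p i * (\<Sum>j\<in>J. q j * (c + g j))) = c + (\<Sum>j\<in>J. q j * g j)"
proof -
  have "(\<Sum>j\<in>J. q j * (c + g j)) = c + (\<Sum>j\<in>J. q j * g j)"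
    using assms(2) by (simp add: distrib_left sum.distrib flip: sum_distrib_right)
  then show ?thesis using assms(1) by (simp flip: sum_distrib_right)
qed

lemma sum_mult_sum_cmult:
  "(\<Sum>i\<in>I. p i * (\<Sum>j\<in>J. q j * (c * f i j))) = c * (\<Sum>i\<in>I. p i * (\<Sum>j\<in>J. q j * f i j))"
  for p :: "'a \<Rightarrow> real" and q :: "'b \<Rightarrow> real"
  by (simp add: sum_distrib_left mult_ac)

lemma sum_mult_sum_exp_shift_le:
  fixes p :: "'a \<Rightarrow> real" and q :: "'b \<Rightarrow> real"
  assumes "(\<Sum>i\<in>I. p i * (\<Sum>j\<in>J. q j * exp (X i j))) \<le> exp a"
  shows "(\<Sum>i\<in>I. p i * (\<Sum>j\<in>J. q j * exp (b + X i j - a))) \<le> exp b"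
proof -
  have "(\<Sum>i\<in>I. p i * (\<Sum>j\<in>J. q j * exp (b + X i j - a)))
      = exp (b - a) * (\<Sum>i\<in>I. p i * (\<Sum>j\<in>J. q j * exp (X i j)))"
    by (simp add: sum_distrib_left mult_ac exp_add exp_diff divide_inverse)
  also have "\<dots> \<le> exp (b - a) * exp a" using assms by (intro mult_left_mono) auto
  also have "\<dots> = exp b" by (simp flip: exp_add)
  finally show ?thesis .
qed

lemma sum_ennreal_mult_sum_ennreal:
  fixes a :: "'a \<Rightarrow> real" and b :: "'b \<Rightarrow> real"
  assumes "\<And>i. 0 \<le> a i" "\<And>j. 0 \<le> b j" "\<And>i j. 0 \<le> c i j"
  shows "(\<Sum>i\<in>I. ennreal (a i) * (\<Sum>j\<in>J. ennreal (b j) * ennreal (c i j)))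
       = ennreal (\<Sum>i\<in>I. a i * (\<Sum>j\<in>J. b j * c i j))"
proof -
  have "(\<Sum>j\<in>J. ennreal (b j) * ennreal (c i j)) = ennreal (\<Sum>j\<in>J. b j * c i j)" for i
    using assms by (simp add: ennreal_mult[symmetric])
  moreover have "0 \<le> (\<Sum>j\<in>J. b j * c i j)" for i using assms by (intro sum_nonneg) auto
  ultimately show ?thesis using assms by (simp add: ennreal_mult[symmetric])
qed

section \<open>Iterated kernels on probability mass functions\<close>

lemma iterate_bind_pmf_invariant:
  assumes "\<And>z. z \<in> set_pmf p \<Longrightarrow> I 0 z"
    and "\<And>k z z'. k < N \<Longrightarrow> I k z \<Longrightarrow> z' \<in> set_pmf (K z) \<Longrightarrow> I (Suc k) z'"
  shows "k \<le> N \<Longrightarrow> z \<in> set_pmf (((\<lambda>p. bind_pmf p K) ^^ k) p) \<Longrightarrow> I k z"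
proof (induction k arbitrary: z)
  case 0 then show ?case using assms(1) by simp
next
  case (Suc k)
  then obtain z0 where "z0 \<in> set_pmf (((\<lambda>p. bind_pmf p K) ^^ k) p)" "z \<in> set_pmf (K z0)" by auto
  then show ?case using Suc assms(2)[of k z0 z] by simp
qed

lemma nn_integral_iterate_bind_pmf_le:
  assumes "\<And>z. z \<in> set_pmf p \<Longrightarrow> I 0 z"
    and "\<And>k z z'. k < N \<Longrightarrow> I k z \<Longrightarrow> z' \<in> set_pmf (K z) \<Longrightarrow> I (Suc k) z'"
    and "\<And>k z. k < N \<Longrightarrow> I k z \<Longrightarrow> (\<integral>\<^sup>+z'. F z' \<partial>K z) \<le> F z"
  shows "k \<le> N \<Longrightarrow> (\<integral>\<^sup>+z. F z \<partial>(((\<lambda>p. bind_pmf p K) ^^ k) p)) \<le> (\<integral>\<^sup>+z. F z \<partial>p)"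
proof (induction k)
  case 0 then show ?case by simp
next
  case (Suc k)
  have "(\<integral>\<^sup>+z. F z \<partial>(((\<lambda>p. bind_pmf p K) ^^ Suc k) p))
      = (\<integral>\<^sup>+z. (\<integral>\<^sup>+z'. F z' \<partial>K z) \<partial>(((\<lambda>p. bind_pmf p K) ^^ k) p))" by simp
  also have "\<dots> \<le> (\<integral>\<^sup>+z. F z \<partial>(((\<lambda>p. bind_pmf p K) ^^ k) p))"
    using iterate_bind_pmf_invariant[of p I N K k] assms Suc.prems
    by (intro nn_integral_mono_AE) (auto simp: AE_measure_pmf_iff intro!: assms(3))
  also have "\<dots> \<le> (\<integral>\<^sup>+z. F z \<partial>p)" using Suc by simp
  finally show ?case .
qed

lemma map_pmf_iterate_bind_pmf:
  assumes "\<And>z. map_pmf f (K' z) = K (f z)"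
  shows "map_pmf f (((\<lambda>p. bind_pmf p K') ^^ k) p) = ((\<lambda>p. bind_pmf p K) ^^ k) (map_pmf f p)"
  by (induction k) (simp_all add: map_bind_pmf assms bind_map_pmf[symmetric])

lemma measure_pmf_Markov_inequality:
  fixes M :: "'a pmf" and F :: "'a \<Rightarrow> real"
  assumes "(\<integral>\<^sup>+z. ennreal (F z) \<partial>M) \<le> ennreal B" "0 < c" "0 \<le> B"
  shows "measure_pmf.prob M {z. c \<le> F z} \<le> B / c"
proof -
  have "ennreal c * emeasure M {z. c \<le> F z} = (\<integral>\<^sup>+z. ennreal c * indicator {z. c \<le> F z} z \<partial>M)"
    by (simp add: nn_integral_cmult_indicator)
  also have "\<dots> \<le> (\<integral>\<^sup>+z. ennreal (F z) \<partial>M)"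
    by (intro nn_integral_mono) (auto split: split_indicator intro: ennreal_leI)
  finally have "ennreal (c * measure_pmf.prob M {z. c \<le> F z}) \<le> ennreal B"
    using assms by (simp add: measure_pmf.emeasure_eq_measure ennreal_mult)
  then show ?thesis using assms by (simp add: pos_le_divide_eq mult.commute)
qed

lemma measure_pmf_prob_mono_on_support:
  assumes "\<And>z. z \<in> set_pmf M \<Longrightarrow> z \<in> A \<Longrightarrow> z \<in> B"
  shows "measure_pmf.prob M A \<le> measure_pmf.prob M B"
proof -
  have "measure_pmf.prob M A = measure_pmf.prob M (A \<inter> set_pmf M)"
    by (rule measure_Int_set_pmf[symmetric])
  also have "\<dots> \<le> measure_pmf.prob M (B \<inter> set_pmf M)"
    using assms by (intro measure_pmf.finite_measure_mono) auto
  also have "\<dots> = measure_pmf.prob M B" by (rule measure_Int_set_pmf)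
  finally show ?thesis .
qed

section \<open>The sampling distributions and the clipped estimator\<close>

lemma sum_pmf_UNIV [simp]: "(\<Sum>x\<in>UNIV. pmf p x) = 1" for p :: "'a::finite pmf"
  by (rule sum_pmf_eq_1) auto

lemma nn_integral_pmf_finite_UNIV:
  "(\<integral>\<^sup>+x. f x \<partial>measure_pmf p) = (\<Sum>x\<in>UNIV. ennreal (pmf p x) * f x)" for p :: "'a::finite pmf"
  by (simp add: nn_integral_measure_pmf nn_integral_count_space_finite)

lemma abs_inner_le_1: "norm a \<le> 1 \<Longrightarrow> norm b \<le> 1 \<Longrightarrow> \<bar>a \<bullet> b\<bar> \<le> (1::real)"
  for a b :: "'a::real_inner"
  using Cauchy_Schwarz_ineq2[of a b] mult_mono[of "norm a" 1 "norm b" 1] by simp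

lemma power2_norm_vec_eq_sum: "(norm x)\<^sup>2 = (\<Sum>j\<in>UNIV. (x $ j)\<^sup>2)" for x :: "real^'d::finite"
  unfolding power2_norm_eq_inner inner_vec_def by (simp add: power2_eq_square)

lemma pmf_row_dist:
  fixes w :: "'n::finite \<Rightarrow> real"
  assumes "\<And>i. 0 < w i"
  shows "pmf (row_dist w) i = w i / (\<Sum>k\<in>UNIV. w k)"
proof -
  have W: "0 < (\<Sum>k\<in>UNIV. w k)" using assms by (intro sum_pos) auto
  have abs: "(\<Sum>k\<in>UNIV. \<bar>w k\<bar>) = (\<Sum>k\<in>UNIV. w k)"
    using assms by (intro sum.cong) (auto intro: abs_of_pos)
  have nonneg: "\<And>i. 0 \<le> w i / (\<Sum>k\<in>UNIV. \<bar>w k\<bar>)" using assms W abs by (simp add: less_imp_le)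
  have "(\<Sum>x\<in>UNIV. w x / (\<Sum>k\<in>UNIV. \<bar>w k\<bar>)) = 1"
    using W abs by (simp flip: sum_divide_distrib)
  then have "(\<integral>\<^sup>+x. ennreal (w x / (\<Sum>k\<in>UNIV. \<bar>w k\<bar>)) \<partial>count_space UNIV) = 1"
    using nonneg by (simp add: nn_integral_count_space_finite sum_ennreal)
  then show ?thesis unfolding row_dist_def using pmf_embed_pmf[OF nonneg] abs by simp
qed

lemma pmf_col_dist:
  fixes x :: "real^'d::finite"
  assumes "x \<noteq> 0"
  shows "pmf (col_dist x) j = (x $ j)\<^sup>2 / (norm x)\<^sup>2"
proof -
  have nonneg: "\<And>j. 0 \<le> (x $ j)\<^sup>2 / (norm x)\<^sup>2" by simp
  have "(\<Sum>j\<in>UNIV. (x $ j)\<^sup>2 / (norm x)\<^sup>2) = 1"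
    using assms by (simp add: power2_norm_vec_eq_sum[symmetric] flip: sum_divide_distrib)
  then have "(\<integral>\<^sup>+j. ennreal ((x $ j)\<^sup>2 / (norm x)\<^sup>2) \<partial>count_space UNIV) = 1"
    by (simp add: nn_integral_count_space_finite sum_ennreal)
  then show ?thesis unfolding col_dist_def using pmf_embed_pmf[OF nonneg] assms by simp
qed

lemma abs_clip_le: "0 \<le> V \<Longrightarrow> \<bar>clip z V\<bar> \<le> V"
  unfolding clip_def by auto

lemma clip_square_le: "0 \<le> V \<Longrightarrow> (clip z V)\<^sup>2 \<le> z\<^sup>2"
  unfolding clip_def by (auto simp: abs_le_square_iff[symmetric] min_def max_def)

lemma abs_clip_diff_le:
  assumes "0 < V" shows "\<bar>clip z V - z\<bar> \<le> z\<^sup>2 / V"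
proof (cases "\<bar>z\<bar> \<le> V")
  case True then show ?thesis unfolding clip_def by (auto simp: min_def max_def)
next
  case False
  then have "\<bar>clip z V - z\<bar> \<le> \<bar>z\<bar>" unfolding clip_def using assms by (auto simp: min_def max_def)
  also have "\<dots> = \<bar>z\<bar> * V / V" using assms by simp
  also have "\<dots> \<le> \<bar>z\<bar> * \<bar>z\<bar> / V" using False assms by (intro divide_right_mono mult_left_mono) auto
  finally show ?thesis by (simp add: power2_eq_square abs_mult_self_eq)
qed

definition raw_estimate :: "real^'d::finite^'n::finite \<Rightarrow> real^'d \<Rightarrow> 'd \<Rightarrow> 'n \<Rightarrow> real" where
  "raw_estimate A x j k = A $ k $ j * (norm x)\<^sup>2 / x $ j"

definition estimate :: "real^'d::finite^'n::finite \<Rightarrow> real \<Rightarrow> real^'d \<Rightarrow> 'd \<Rightarrow> 'n \<Rightarrow> real" where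
  "estimate A \<eta> x j k = clip (raw_estimate A x j k) (1 / \<eta>)"

lemma raw_estimate_unbiased:
  "(\<Sum>j\<in>UNIV. pmf (col_dist x) j * raw_estimate A x j k) = A $ k \<bullet> x"
proof (cases "x = 0")
  case True then show ?thesis by (simp add: raw_estimate_def)
next
  case False
  then have "pmf (col_dist x) j * raw_estimate A x j k = A $ k $ j * x $ j" for j
    by (auto simp: pmf_col_dist raw_estimate_def power2_eq_square)
  then show ?thesis by (simp add: inner_vec_def)
qed

lemma raw_estimate_second_moment_le:
  assumes "norm x \<le> 1" "norm (A $ k) \<le> 1"
  shows "(\<Sum>j\<in>UNIV. pmf (col_dist x) j * (raw_estimate A x j k)\<^sup>2) \<le> 1"
proof (cases "x = 0")
  case True then show ?thesis by (simp add: raw_estimate_def)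
next
  case False
  then have "pmf (col_dist x) j * (raw_estimate A x j k)\<^sup>2 \<le> (A $ k $ j)\<^sup>2 * (norm x)\<^sup>2" for j
    by (auto simp: pmf_col_dist raw_estimate_def power2_eq_square)
  then have "(\<Sum>j\<in>UNIV. pmf (col_dist x) j * (raw_estimate A x j k)\<^sup>2)
      \<le> (\<Sum>j\<in>UNIV. (A $ k $ j)\<^sup>2 * (norm x)\<^sup>2)"
    by (intro sum_mono)
  also have "\<dots> = (norm (A $ k))\<^sup>2 * (norm x)\<^sup>2" by (simp add: power2_norm_vec_eq_sum sum_distrib_right)
  also have "\<dots> \<le> 1" using assms by (simp add: power_le_one mult_le_one)
  finally show ?thesis .
qed

lemma abs_estimate_le: "0 < \<eta> \<Longrightarrow> \<bar>estimate A \<eta> x j k\<bar> \<le> 1 / \<eta>"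
  unfolding estimate_def by (intro abs_clip_le) simp

lemma estimate_second_moment_le:
  assumes "0 < \<eta>" "norm x \<le> 1" "norm (A $ k) \<le> 1"
  shows "(\<Sum>j\<in>UNIV. pmf (col_dist x) j * (estimate A \<eta> x j k)\<^sup>2) \<le> 1"
proof -
  have "(\<Sum>j\<in>UNIV. pmf (col_dist x) j * (estimate A \<eta> x j k)\<^sup>2)
      \<le> (\<Sum>j\<in>UNIV. pmf (col_dist x) j * (raw_estimate A x j k)\<^sup>2)"
    unfolding estimate_def using assms by (intro sum_mono mult_left_mono clip_square_le) auto
  also have "\<dots> \<le> 1" using raw_estimate_second_moment_le assms by blast
  finally show ?thesis .
qed

text \<open>Clipping at \<open>1/\<eta>\<close> moves the estimate by at most \<open>\<eta> \<tilde>v\<^sup>2\<close>, so the bias is at most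
  \<open>\<eta>\<close> times the second moment.\<close>

lemma estimate_bias_le:
  assumes "0 < \<eta>" "norm x \<le> 1" "norm (A $ k) \<le> 1"
  shows "\<bar>(\<Sum>j\<in>UNIV. pmf (col_dist x) j * estimate A \<eta> x j k) - A $ k \<bullet> x\<bar> \<le> \<eta>"
proof -
  have "(\<Sum>j\<in>UNIV. pmf (col_dist x) j * estimate A \<eta> x j k) - A $ k \<bullet> x
      = (\<Sum>j\<in>UNIV. pmf (col_dist x) j * (estimate A \<eta> x j k - raw_estimate A x j k))"
    using raw_estimate_unbiased[of x A k] by (simp add: sum_subtractf right_diff_distrib)
  also have "\<bar>\<dots>\<bar> \<le> (\<Sum>j\<in>UNIV. \<bar>pmf (col_dist x) j * (estimate A \<eta> x j k - raw_estimate A x j k)\<bar>)"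
    by (rule sum_abs)
  also have "\<dots> \<le> (\<Sum>j\<in>UNIV. pmf (col_dist x) j * ((raw_estimate A x j k)\<^sup>2 * \<eta>))"
  proof (intro sum_mono)
    fix j
    have "\<bar>estimate A \<eta> x j k - raw_estimate A x j k\<bar> \<le> (raw_estimate A x j k)\<^sup>2 / (1 / \<eta>)"
      unfolding estimate_def using assms by (intro abs_clip_diff_le) simp
    then show "\<bar>pmf (col_dist x) j * (estimate A \<eta> x j k - raw_estimate A x j k)\<bar>
        \<le> pmf (col_dist x) j * ((raw_estimate A x j k)\<^sup>2 * \<eta>)"
      by (simp add: abs_mult mult_left_mono)
  qed
  also have "\<dots> = \<eta> * (\<Sum>j\<in>UNIV. pmf (col_dist x) j * (raw_estimate A x j k)\<^sup>2)"
    by (simp add: sum_distrib_left algebra_simps)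
  also have "\<dots> \<le> \<eta>"
    using raw_estimate_second_moment_le[of x A k] assms mult_left_mono[of _ 1 \<eta>] by simp
  finally show ?thesis .
qed

lemma expected_estimate_second_moment_le:
  assumes "0 < \<eta>" "norm x \<le> 1" "\<forall>k. norm (A $ k) \<le> 1"
  shows "(\<Sum>j\<in>UNIV. pmf (col_dist x) j * (\<Sum>k\<in>UNIV. pmf p k * (estimate A \<eta> x j k)\<^sup>2)) \<le> 1"
proof -
  have "(\<Sum>j\<in>UNIV. pmf (col_dist x) j * (\<Sum>k\<in>UNIV. pmf p k * (estimate A \<eta> x j k)\<^sup>2))
      = (\<Sum>k\<in>UNIV. pmf p k * (\<Sum>j\<in>UNIV. pmf (col_dist x) j * (estimate A \<eta> x j k)\<^sup>2))"
    by (rule sum_mult_sum_swap) simp_all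
  also have "\<dots> \<le> (\<Sum>k\<in>UNIV. pmf p k * 1)"
    using estimate_second_moment_le[OF assms(1,2)] assms(3) by (intro sum_mono mult_left_mono) auto
  finally show ?thesis by simp
qed

lemma abs_expected_estimate_le:
  assumes "0 < \<eta>"
  shows "\<bar>\<Sum>k\<in>UNIV. pmf p k * estimate A \<eta> x j k\<bar> \<le> 1 / \<eta>"
proof -
  have "\<bar>\<Sum>k\<in>UNIV. pmf p k * estimate A \<eta> x j k\<bar> \<le> (\<Sum>k\<in>UNIV. pmf p k * \<bar>estimate A \<eta> x j k\<bar>)"
    by (rule order_trans[OF sum_abs]) (simp add: abs_mult)
  also have "\<dots> \<le> (\<Sum>k\<in>UNIV. pmf p k * (1 / \<eta>))"
    using abs_estimate_le[OF assms] by (intro sum_mono mult_left_mono) auto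
  also have "\<dots> = 1 / \<eta>" by (simp flip: sum_divide_distrib)
  finally show ?thesis .
qed

lemma expected_estimate_bias_le:
  assumes "0 < \<eta>" "norm x \<le> 1" "\<forall>k. norm (A $ k) \<le> 1"
  shows "(\<Sum>i\<in>UNIV. pmf p i * (\<Sum>j\<in>UNIV. pmf (col_dist x) j *
            (A $ i \<bullet> x - (\<Sum>k\<in>UNIV. pmf p k * estimate A \<eta> x j k)))) \<le> \<eta>"
proof -
  have "(\<Sum>i\<in>UNIV. pmf p i * (\<Sum>j\<in>UNIV. pmf (col_dist x) j *
            (A $ i \<bullet> x - (\<Sum>k\<in>UNIV. pmf p k * estimate A \<eta> x j k))))
      = (\<Sum>k\<in>UNIV. pmf p k * (A $ k \<bullet> x))
        - (\<Sum>j\<in>UNIV. pmf (col_dist x) j * (\<Sum>k\<in>UNIV. pmf p k * estimate A \<eta> x j k))"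
    by (rule sum_mult_sum_diff) simp_all
  also have "(\<Sum>j\<in>UNIV. pmf (col_dist x) j * (\<Sum>k\<in>UNIV. pmf p k * estimate A \<eta> x j k))
      = (\<Sum>k\<in>UNIV. pmf p k * (\<Sum>j\<in>UNIV. pmf (col_dist x) j * estimate A \<eta> x j k))"
    by (rule sum_mult_sum_swap) simp_all
  also have "(\<Sum>k\<in>UNIV. pmf p k * (A $ k \<bullet> x)) - \<dots>
      = (\<Sum>k\<in>UNIV. pmf p k * (A $ k \<bullet> x - (\<Sum>j\<in>UNIV. pmf (col_dist x) j * estimate A \<eta> x j k)))"
    by (simp add: right_diff_distrib sum_subtractf)
  also have "\<dots> \<le> (\<Sum>k\<in>UNIV. pmf p k * \<eta>)"
    using estimate_bias_le[OF assms(1,2)] assms(3)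
    by (intro sum_mono mult_left_mono) (auto simp: abs_le_iff)
  finally show ?thesis by (simp flip: sum_distrib_right)
qed

definition potential_drift :: "real \<Rightarrow> real" where
  "potential_drift \<eta> = 7 * \<eta> * \<eta> + 100 * (7 * \<eta>)\<^sup>2"

text \<open>In the next two lemmas the exponent is at most \<open>7\<eta> (1 + 1/\<eta>) \<le> 71/10\<close> and has mean at most
  \<open>\<eta>\<close> and second moment at most \<open>4\<close>; this is where the constants of the potential come from.\<close>

lemma estimate_deviation_exp_mean_le:
  assumes "0 < \<eta>" "\<eta> \<le> 1/70" "norm x \<le> 1" "norm (A $ k) \<le> 1"
  shows "(\<Sum>j\<in>UNIV. pmf (col_dist x) j * exp (7*\<eta> * (estimate A \<eta> x j k - A $ k \<bullet> x)))
           \<le> exp (potential_drift \<eta>)"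
proof -
  define \<mu> where "\<mu> = A $ k \<bullet> x"
  have \<mu>: "\<bar>\<mu>\<bar> \<le> 1" unfolding \<mu>_def using abs_inner_le_1[OF assms(4,3)] .
  then have \<mu>2: "\<mu>\<^sup>2 \<le> 1" by (simp add: abs_square_le_1)
  have "(\<Sum>j\<in>UNIV. pmf (col_dist x) j * exp (7*\<eta> * (estimate A \<eta> x j k - \<mu>)))
      \<le> exp (7*\<eta> * \<eta> + 100 * (7*\<eta>)\<^sup>2)"
  proof (rule weighted_exp_le)
    show "7*\<eta> * (estimate A \<eta> x j k - \<mu>) \<le> 71/10" for j
    proof -
      have "7*\<eta> * (estimate A \<eta> x j k - \<mu>) \<le> 7*\<eta> * (1/\<eta> + 1)"
        using abs_estimate_le[OF assms(1), of A x j k] \<mu> assms by (intro mult_left_mono) auto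
      also have "\<dots> = 7 + 7*\<eta>" using assms by (simp add: field_simps)
      finally show ?thesis using assms by simp
    qed
    have "(\<Sum>j\<in>UNIV. pmf (col_dist x) j * (estimate A \<eta> x j k - \<mu>))
        = (\<Sum>j\<in>UNIV. pmf (col_dist x) j * estimate A \<eta> x j k) - \<mu>"
      by (simp add: right_diff_distrib sum_subtractf flip: sum_distrib_right)
    then show "(\<Sum>j\<in>UNIV. pmf (col_dist x) j * (estimate A \<eta> x j k - \<mu>)) \<le> \<eta>"
      using estimate_bias_le[OF assms(1,3,4)] unfolding \<mu>_def by (simp add: abs_le_iff)
    have "(\<Sum>j\<in>UNIV. pmf (col_dist x) j * (estimate A \<eta> x j k - \<mu>)\<^sup>2)
        \<le> (\<Sum>j\<in>UNIV. pmf (col_dist x) j * (2 * (estimate A \<eta> x j k)\<^sup>2 + 2 * \<mu>\<^sup>2))"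
      by (intro sum_mono mult_left_mono square_diff_le) simp
    also have "\<dots> = 2 * (\<Sum>j\<in>UNIV. pmf (col_dist x) j * (estimate A \<eta> x j k)\<^sup>2)
        + 2 * \<mu>\<^sup>2 * (\<Sum>j\<in>UNIV. pmf (col_dist x) j)"
      by (simp add: distrib_left sum.distrib sum_distrib_left sum_distrib_right mult_ac del: sum_pmf_UNIV)
    finally show "(\<Sum>j\<in>UNIV. pmf (col_dist x) j * (estimate A \<eta> x j k - \<mu>)\<^sup>2) \<le> 4"
      using estimate_second_moment_le[OF assms(1,3,4)] \<mu>2 by simp
  qed (use assms(1) in simp_all)
  then show ?thesis unfolding \<mu>_def potential_drift_def .
qed

lemma expected_estimate_deviation_exp_mean_le:
  assumes "0 < \<eta>" "\<eta> \<le> 1/70" "norm x \<le> 1" "\<forall>k. norm (A $ k) \<le> 1"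
  shows "(\<Sum>i\<in>UNIV. pmf p i * (\<Sum>j\<in>UNIV. pmf (col_dist x) j *
            exp (7*\<eta> * (A $ i \<bullet> x - (\<Sum>k\<in>UNIV. pmf p k * estimate A \<eta> x j k)))))
           \<le> exp (potential_drift \<eta>)"
proof -
  define c where "c j = (\<Sum>k\<in>UNIV. pmf p k * estimate A \<eta> x j k)" for j
  define D where "D j = (\<Sum>k\<in>UNIV. pmf p k * (estimate A \<eta> x j k)\<^sup>2)" for j
  have a: "\<bar>A $ i \<bullet> x\<bar> \<le> 1" for i using abs_inner_le_1 assms(3,4) by blast
  have "(\<Sum>i\<in>UNIV. pmf p i * (\<Sum>j\<in>UNIV. pmf (col_dist x) j * exp (7*\<eta> * (A $ i \<bullet> x - c j))))
     \<le> exp (7*\<eta> * \<eta> + 100 * (7*\<eta>)\<^sup>2)"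
  proof (rule weighted_exp_le_two_stage)
    show "7*\<eta> * (A $ i \<bullet> x - c j) \<le> 71/10" for i j
    proof -
      have "7*\<eta> * (A $ i \<bullet> x - c j) \<le> 7*\<eta> * (1 + 1/\<eta>)"
        using a[of i] abs_expected_estimate_le[OF assms(1), of p A x j] assms(1)
        unfolding c_def by (intro mult_left_mono) auto
      also have "\<dots> = 7 + 7*\<eta>" using assms by (simp add: field_simps)
      finally show ?thesis using assms by simp
    qed
    show "(\<Sum>i\<in>UNIV. pmf p i * (\<Sum>j\<in>UNIV. pmf (col_dist x) j * (A $ i \<bullet> x - c j))) \<le> \<eta>"
      unfolding c_def by (rule expected_estimate_bias_le[OF assms(1,3,4)])
    have "(A $ i \<bullet> x - c j)\<^sup>2 \<le> 2 + 2 * D j" for i j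
    proof -
      have "(c j)\<^sup>2 \<le> D j" unfolding c_def D_def by (rule square_weighted_mean_le) auto
      moreover have "(A $ i \<bullet> x)\<^sup>2 \<le> 1" using a[of i] by (simp add: abs_square_le_1)
      ultimately show ?thesis using square_diff_le[of "A $ i \<bullet> x" "c j"] by linarith
    qed
    then have "(\<Sum>i\<in>UNIV. pmf p i * (\<Sum>j\<in>UNIV. pmf (col_dist x) j * (A $ i \<bullet> x - c j)\<^sup>2))
        \<le> (\<Sum>i\<in>UNIV. pmf p i * (\<Sum>j\<in>UNIV. pmf (col_dist x) j * (2 + 2 * D j)))"
      by (intro sum_mono mult_left_mono) auto
    also have "\<dots> = 2 + 2 * (\<Sum>j\<in>UNIV. pmf (col_dist x) j * D j)"
      by (subst sum_mult_sum_const_add) (simp_all add: sum_distrib_left mult_ac)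
    finally show "(\<Sum>i\<in>UNIV. pmf p i * (\<Sum>j\<in>UNIV. pmf (col_dist x) j * (A $ i \<bullet> x - c j)\<^sup>2)) \<le> 4"
      using expected_estimate_second_moment_le[OF assms(1,3,4), of p] unfolding D_def by linarith
  qed (use assms(1) in simp_all)
  then show ?thesis unfolding c_def potential_drift_def .
qed

section \<open>Projection onto the unit ball and the Huber potential\<close>

definition ball_proj :: "real^'d::finite \<Rightarrow> real^'d" where
  "ball_proj y = (1 / max 1 (norm y)) *\<^sub>R y"

text \<open>\<open>huber y\<close> is the maximum of \<open>y \<bullet> u - \<parallel>u\<parallel>\<^sup>2 / 2\<close> over the unit ball, attained at
  \<open>u = ball_proj y\<close>; it is the potential of the lazily projected gradient steps
  \<open>x\<^sub>t = ball_proj y\<^sub>t\<close>.\<close>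

definition huber :: "real^'d::finite \<Rightarrow> real" where
  "huber y = (if norm y \<le> 1 then (norm y)\<^sup>2 / 2 else norm y - 1/2)"

lemma ball_proj_eq: "ball_proj y = (if norm y \<le> 1 then y else (1 / norm y) *\<^sub>R y)"
  unfolding ball_proj_def by (auto simp: max_def)

lemma norm_ball_proj_le: "norm (ball_proj y) \<le> 1"
  unfolding ball_proj_def by (auto simp: max_def field_simps)

lemma inner_minus_half_sq_le_huber:
  fixes y u :: "real^'d::finite"
  assumes "norm u \<le> 1" shows "y \<bullet> u - (norm u)\<^sup>2 / 2 \<le> huber y"
proof -
  have "y \<bullet> u \<le> norm y * norm u" by (rule norm_cauchy_schwarz)
  moreover have "norm y * norm u - (norm u)\<^sup>2 / 2 \<le> huber y"
  proof (cases "norm y \<le> 1")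
    case True
    have "0 \<le> (norm y - norm u)\<^sup>2" by simp
    then show ?thesis using True unfolding huber_def by (simp add: power2_diff field_simps)
  next
    case False
    have "0 \<le> (1 - norm u) * (norm y - 1) + (1 - norm u)\<^sup>2 / 2"
      using False assms by (intro add_nonneg_nonneg mult_nonneg_nonneg) auto
    then show ?thesis using False unfolding huber_def by (simp add: power2_diff field_simps)
  qed
  ultimately show ?thesis by linarith
qed

lemma huber_eq_at_ball_proj: "huber y = y \<bullet> ball_proj y - (norm (ball_proj y))\<^sup>2 / 2"
proof (cases "norm y \<le> 1")
  case True then show ?thesis unfolding huber_def ball_proj_eq by (simp add: power2_norm_eq_inner)
next
  case False
  then have "norm y \<noteq> 0" by auto
  then show ?thesis using False unfolding huber_def ball_proj_eq
    by (simp add: norm_scaleR power2_norm_eq_inner[symmetric] power2_eq_square)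
qed

lemma ball_proj_variational_ineq:
  fixes a u :: "real^'d::finite"
  assumes "norm u \<le> 1" shows "(a - ball_proj a) \<bullet> (u - ball_proj a) \<le> 0"
proof (cases "norm a \<le> 1")
  case True then show ?thesis unfolding ball_proj_eq by simp
next
  case False
  define e where "e = (1 / norm a) *\<^sub>R a"
  have na: "norm a \<noteq> 0" using False by auto
  have ne: "norm e = 1" unfolding e_def using na by (simp add: norm_scaleR)
  have "(norm a - 1) / norm a = 1 - 1 / norm a" using na by (simp add: diff_divide_distrib)
  then have ae: "a - e = (norm a - 1) *\<^sub>R e" by (simp add: e_def scaleR_diff_left)
  have "e \<bullet> u \<le> 1" using norm_cauchy_schwarz[of e u] ne assms by simp
  then have "e \<bullet> (u - e) \<le> 0" using ne by (simp add: inner_diff_right power2_norm_eq_inner[symmetric])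
  then have "(norm a - 1) * (e \<bullet> (u - e)) \<le> 0" using False by (simp add: mult_nonneg_nonpos)
  moreover have "(a - e) \<bullet> (u - e) = (norm a - 1) * (e \<bullet> (u - e))" unfolding ae by simp
  ultimately show ?thesis using False unfolding ball_proj_eq e_def[symmetric] by simp
qed

lemma ball_proj_nonexpansive: "norm (ball_proj a - ball_proj b) \<le> norm (a - b)"
proof -
  have "(a - ball_proj a) \<bullet> (ball_proj b - ball_proj a) \<le> 0"
    and "(b - ball_proj b) \<bullet> (ball_proj a - ball_proj b) \<le> 0"
    by (rule ball_proj_variational_ineq[OF norm_ball_proj_le])+
  then have "(norm (ball_proj a - ball_proj b))\<^sup>2 \<le> (a - b) \<bullet> (ball_proj a - ball_proj b)"
    by (simp add: power2_norm_eq_inner algebra_simps inner_diff_left inner_diff_right inner_commute)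
  also have "\<dots> \<le> norm (a - b) * norm (ball_proj a - ball_proj b)" by (rule norm_cauchy_schwarz)
  finally show ?thesis
    by (cases "ball_proj a = ball_proj b") (auto simp: power2_eq_square mult_le_cancel_right)
qed

text \<open>Smoothness of \<open>huber\<close>: its gradient \<open>ball_proj\<close> is 1-Lipschitz.\<close>

lemma huber_add_le: "huber (y + h) \<le> huber y + h \<bullet> ball_proj y + (norm h)\<^sup>2"
proof -
  have "y \<bullet> ball_proj (y + h) - (norm (ball_proj (y + h)))\<^sup>2 / 2 \<le> huber y"
    by (rule inner_minus_half_sq_le_huber[OF norm_ball_proj_le])
  then have "huber (y + h) \<le> huber y + h \<bullet> ball_proj (y + h)"
    unfolding huber_eq_at_ball_proj[of "y + h"] by (simp add: inner_add_left)
  also have "h \<bullet> ball_proj (y + h) = h \<bullet> ball_proj y + h \<bullet> (ball_proj (y + h) - ball_proj y)"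
    by (simp add: inner_diff_right)
  also have "h \<bullet> (ball_proj (y + h) - ball_proj y) \<le> norm h * norm (ball_proj (y + h) - ball_proj y)"
    by (rule norm_cauchy_schwarz)
  also have "\<dots> \<le> norm h * norm h"
    using ball_proj_nonexpansive[of "y + h" y] by (intro mult_left_mono) auto
  finally show ?thesis by (simp add: power2_eq_square)
qed

lemma huber_gradient_step_le:
  assumes "huber y \<le> e * G + e\<^sup>2 * c" "norm a \<le> 1"
  shows "huber (y + e *\<^sub>R a) \<le> e * (G + a \<bullet> ball_proj y) + e\<^sup>2 * (c + 1)"
proof -
  have "norm (e *\<^sub>R a) \<le> \<bar>e\<bar>" using assms(2) mult_left_mono[of "norm a" 1 "\<bar>e\<bar>"] by simp
  then have "(norm (e *\<^sub>R a))\<^sup>2 \<le> e\<^sup>2" using power_mono[of _ _ 2] by (metis norm_ge_zero power2_abs)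
  then show ?thesis using huber_add_le[of y "e *\<^sub>R a"] assms(1) by (simp add: algebra_simps)
qed

section \<open>The augmented run and its invariant\<close>

text \<open>The augmented state \<open>((y, w, s), t, V, P, Q, G)\<close> extends the algorithm's state by the step count
  and the quantities \<open>V, P, Q, G\<close> of the analysis.\<close>

type_synonym ('d, 'n) aug_state =
  "('d, 'n) perc_state \<times> nat \<times> ('n \<Rightarrow> real) \<times> real \<times> real \<times> real"

definition aug_update ::
  "real^'d::finite^'n::finite \<Rightarrow> real \<Rightarrow> nat \<Rightarrow> ('d, 'n) aug_state \<Rightarrow> 'n \<Rightarrow> 'd \<Rightarrow> ('d, 'n) aug_state"
where
  "aug_update A \<eta> T z i j = (case z of ((y, w, s), t, V, P, Q, G) \<Rightarrow>
     let x = ball_proj y; v = estimate A \<eta> x j in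
     ((y + (1 / sqrt (2 * real T)) *\<^sub>R A $ i, (\<lambda>k. w k * (1 - \<eta> * v k + \<eta>\<^sup>2 * (v k)\<^sup>2)), s + x),
      Suc t, (\<lambda>k. V k + v k),
      P + (\<Sum>k\<in>UNIV. pmf (row_dist w) k * v k),
      Q + (\<Sum>k\<in>UNIV. pmf (row_dist w) k * (v k)\<^sup>2),
      G + A $ i \<bullet> x))"

definition aug_step ::
  "real^'d::finite^'n::finite \<Rightarrow> real \<Rightarrow> nat \<Rightarrow> ('d, 'n) aug_state \<Rightarrow> ('d, 'n) aug_state pmf" where
  "aug_step A \<eta> T z =
     bind_pmf (row_dist (fst (snd (fst z)))) (\<lambda>i.
       bind_pmf (col_dist (ball_proj (fst (fst z)))) (\<lambda>j. return_pmf (aug_update A \<eta> T z i j)))"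

definition aug_init :: "('d::finite, 'n::finite) aug_state" where
  "aug_init = ((0, \<lambda>_. 1, 0), 0, \<lambda>_. 0, 0, 0, 0)"

lemma map_fst_aug_step: "map_pmf fst (aug_step A \<eta> T z) = perc_step A \<eta> T (fst z)"
proof -
  obtain y w s r where "z = ((y, w, s), r)" by (metis prod.exhaust)
  moreover obtain t V P Q G where "r = (t, V, P, Q, G)" by (metis prod.exhaust)
  ultimately show ?thesis
    unfolding aug_step_def perc_step_def
    by (simp add: map_bind_pmf aug_update_def Let_def ball_proj_def estimate_def raw_estimate_def)
qed

lemma set_pmf_aug_step: "z' \<in> set_pmf (aug_step A \<eta> T z) \<Longrightarrow> \<exists>i j. z' = aug_update A \<eta> T z i j"
  unfolding aug_step_def by auto

lemma nn_integral_aug_step: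
  "(\<integral>\<^sup>+z'. f z' \<partial>aug_step A \<eta> T z) =
     (\<Sum>i\<in>UNIV. ennreal (pmf (row_dist (fst (snd (fst z)))) i) *
        (\<Sum>j\<in>UNIV. ennreal (pmf (col_dist (ball_proj (fst (fst z)))) j) * f (aug_update A \<eta> T z i j)))"
  unfolding aug_step_def by (simp add: nn_integral_pmf_finite_UNIV)

lemma weight_sum_step_le:
  fixes w v :: "'n::finite \<Rightarrow> real"
  assumes "\<forall>i. 0 < w i" "(\<Sum>i\<in>UNIV. w i) \<le> c * exp (- \<eta> * P + \<eta>\<^sup>2 * Q)"
  shows "(\<Sum>k\<in>UNIV. w k * (1 - \<eta> * v k + \<eta>\<^sup>2 * (v k)\<^sup>2))
    \<le> c * exp (- \<eta> * (P + (\<Sum>k\<in>UNIV. pmf (row_dist w) k * v k))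
               + \<eta>\<^sup>2 * (Q + (\<Sum>k\<in>UNIV. pmf (row_dist w) k * (v k)\<^sup>2)))"
proof -
  define W where "W = (\<Sum>i\<in>UNIV. w i)"
  define Pv where "Pv = (\<Sum>k\<in>UNIV. pmf (row_dist w) k * v k)"
  define Qv where "Qv = (\<Sum>k\<in>UNIV. pmf (row_dist w) k * (v k)\<^sup>2)"
  have W0: "0 < W" unfolding W_def using assms(1) by (intro sum_pos) auto
  have mean: "(\<Sum>k\<in>UNIV. w k * f k) = W * (\<Sum>k\<in>UNIV. pmf (row_dist w) k * f k)" for f
    using W0 assms(1) by (simp add: pmf_row_dist W_def[symmetric] sum_distrib_left)
  have "(\<Sum>k\<in>UNIV. w k * (1 - \<eta> * v k + \<eta>\<^sup>2 * (v k)\<^sup>2))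
      = W - \<eta> * (\<Sum>k\<in>UNIV. w k * v k) + \<eta>\<^sup>2 * (\<Sum>k\<in>UNIV. w k * (v k)\<^sup>2)"
    unfolding W_def by (simp add: algebra_simps sum.distrib sum_subtractf sum_distrib_left)
  also have "\<dots> = W * (1 + (- \<eta> * Pv + \<eta>\<^sup>2 * Qv))"
    unfolding mean Pv_def Qv_def by (simp add: algebra_simps)
  also have "\<dots> \<le> W * exp (- \<eta> * Pv + \<eta>\<^sup>2 * Qv)"
    using W0 by (intro mult_left_mono exp_ge_add_one_self) auto
  also have "\<dots> \<le> c * exp (- \<eta> * P + \<eta>\<^sup>2 * Q) * exp (- \<eta> * Pv + \<eta>\<^sup>2 * Qv)"
    using assms(2) unfolding W_def by (intro mult_right_mono) auto
  also have "\<dots> = c * exp (- \<eta> * (P + Pv) + \<eta>\<^sup>2 * (Q + Qv))"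
    by (simp add: algebra_simps flip: exp_add)
  finally show ?thesis unfolding Pv_def Qv_def .
qed

lemma weight_lower_step:
  fixes \<eta> V v w :: real
  assumes "exp (- \<eta> * V) \<le> w" "\<bar>\<eta> * v\<bar> \<le> 1"
  shows "exp (- \<eta> * (V + v)) \<le> w * (1 - \<eta> * v + \<eta>\<^sup>2 * v\<^sup>2)"
proof -
  have "exp (- \<eta> * (V + v)) = exp (- \<eta> * V) * exp (- (\<eta> * v))"
    using exp_add[of "- \<eta> * V" "- (\<eta> * v)"] by (simp add: algebra_simps)
  also have "\<dots> \<le> w * (1 - \<eta> * v + \<eta>\<^sup>2 * v\<^sup>2)"
    using assms exp_minus_le_one_minus_plus_sq[OF assms(2)]
    by (intro mult_mono) (auto simp: power_mult_distrib order_trans[OF exp_ge_zero])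
  finally show ?thesis .
qed

text \<open>The bounds on the weights are the multiplicative-weights analysis; the \<open>huber\<close> and
  \<open>y \<bullet> u\<close> clauses are the regret analysis of the gradient steps \<open>y\<^sub>t\<^sub>+\<^sub>1 = y\<^sub>t + A $ i\<^sub>t / \<surd>(2T)\<close>.\<close>

definition aug_invariant ::
  "real^'d::finite^'n::finite \<Rightarrow> real \<Rightarrow> nat \<Rightarrow> nat \<Rightarrow> ('d, 'n) aug_state \<Rightarrow> bool" where
  "aug_invariant A \<eta> T k z = (case z of ((y, w, s), t, V, P, Q, G) \<Rightarrow>
     t = k \<and> (\<forall>i. 0 < w i) \<and> (\<Sum>i\<in>UNIV. w i) \<le> real CARD('n) * exp (- \<eta> * P + \<eta>\<^sup>2 * Q)
     \<and> (\<forall>i. exp (- \<eta> * V i) \<le> w i)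
     \<and> huber y \<le> (1 / sqrt (2 * real T)) * G + (1 / sqrt (2 * real T))\<^sup>2 * real k
     \<and> (\<forall>u m. (\<forall>i. m \<le> A $ i \<bullet> u) \<longrightarrow> (1 / sqrt (2 * real T)) * real k * m \<le> y \<bullet> u)
     \<and> norm s \<le> real k \<and> 0 \<le> Q)"

lemma aug_invariant_init: "aug_invariant A \<eta> T 0 aug_init"
  unfolding aug_invariant_def aug_init_def huber_def by simp

lemma aug_invariant_step:
  fixes A :: "real^'d::finite^'n::finite"
  assumes "0 < \<eta>" "\<forall>k. norm (A $ k) \<le> 1" "aug_invariant A \<eta> T k z"
  shows "aug_invariant A \<eta> T (Suc k) (aug_update A \<eta> T z i j)"
proof -
  obtain y w s t V P Q G where z: "z = ((y, w, s), t, V, P, Q, G)" by (metis prod.exhaust)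
  define x where "x = ball_proj y"
  define v where "v = estimate A \<eta> x j"
  define e where "e = 1 / sqrt (2 * real T)"
  from assms(3) have t: "t = k" and w: "\<forall>i. 0 < w i"
    and W: "(\<Sum>i\<in>UNIV. w i) \<le> real CARD('n) * exp (- \<eta> * P + \<eta>\<^sup>2 * Q)"
    and wV: "\<forall>i. exp (- \<eta> * V i) \<le> w i" and hy: "huber y \<le> e * G + e\<^sup>2 * real k"
    and yu: "\<forall>u m. (\<forall>i. m \<le> A $ i \<bullet> u) \<longrightarrow> e * real k * m \<le> y \<bullet> u"
    and s: "norm s \<le> real k" and Q: "0 \<le> Q"
    unfolding aug_invariant_def z e_def by auto
  have ev: "\<bar>\<eta> * v k\<bar> \<le> 1" for k
    using abs_estimate_le[OF assms(1), of A x j k] assms(1)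
    unfolding v_def by (simp add: abs_mult field_simps)
  have h: "huber (y + e *\<^sub>R A $ i) \<le> e * (G + A $ i \<bullet> x) + e\<^sup>2 * real (Suc k)"
    using huber_gradient_step_le[OF hy, of "A $ i"] assms(2) unfolding x_def by (simp add: algebra_simps)
  have "e * real (Suc k) * m \<le> (y + e *\<^sub>R A $ i) \<bullet> u" if "\<forall>i. m \<le> A $ i \<bullet> u" for u m
  proof -
    have "e * real k * m \<le> y \<bullet> u" using yu that by blast
    moreover have "e * m \<le> e * (A $ i \<bullet> u)" using that unfolding e_def by (intro mult_left_mono) auto
    ultimately show ?thesis by (simp add: inner_add_left algebra_simps)
  qed
  moreover have "norm (s + x) \<le> real (Suc k)"
    using s norm_ball_proj_le[of y] norm_triangle_ineq[of s x] unfolding x_def by simp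
  moreover have "0 < w k * (1 - \<eta> * v k + \<eta>\<^sup>2 * (v k)\<^sup>2)" for k
    using w one_minus_plus_sq_pos[of "\<eta> * v k"] by (simp add: power_mult_distrib)
  moreover have "0 \<le> (\<Sum>k\<in>UNIV. pmf (row_dist w) k * (v k)\<^sup>2)" by (simp add: sum_nonneg)
  moreover have "aug_update A \<eta> T z i j =
      ((y + e *\<^sub>R A $ i, (\<lambda>k. w k * (1 - \<eta> * v k + \<eta>\<^sup>2 * (v k)\<^sup>2)), s + x), Suc t,
       (\<lambda>k. V k + v k), P + (\<Sum>k\<in>UNIV. pmf (row_dist w) k * v k),
       Q + (\<Sum>k\<in>UNIV. pmf (row_dist w) k * (v k)\<^sup>2), G + A $ i \<bullet> x)"
    unfolding z aug_update_def Let_def x_def v_def e_def by simp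
  moreover have "exp (- \<eta> * (V k + v k)) \<le> w k * (1 - \<eta> * v k + \<eta>\<^sup>2 * (v k)\<^sup>2)" for k
    using weight_lower_step wV ev by blast
  ultimately show ?thesis
    using t h weight_sum_step_le[OF w W, of v] Q
    unfolding aug_invariant_def e_def[symmetric] by (auto simp: algebra_simps)
qed

section \<open>The supermartingale potential\<close>

definition payoff_deviation_term :: "real^'d::finite^'n::finite \<Rightarrow> real \<Rightarrow> ('d, 'n) aug_state \<Rightarrow> real"
where
  "payoff_deviation_term A \<eta> z = (case z of ((y, w, s), t, V, P, Q, G) \<Rightarrow>
     \<Sum>k\<in>UNIV. exp (7 * \<eta> * (V k - A $ k \<bullet> s) - potential_drift \<eta> * real t))"

definition gain_deviation_term :: "real \<Rightarrow> ('d::finite, 'n::finite) aug_state \<Rightarrow> real" where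
  "gain_deviation_term \<eta> z = (case z of ((y, w, s), t, V, P, Q, G) \<Rightarrow>
     exp (7 * \<eta> * (G - P) - potential_drift \<eta> * real t))"

definition second_moment_term :: "nat \<Rightarrow> ('d::finite, 'n::finite) aug_state \<Rightarrow> real" where
  "second_moment_term T z = (case z of ((y, w, s), t, V, P, Q, G) \<Rightarrow> (Q + real T - real t) / real T)"

text \<open>Each term is a supermartingale; together they control the deviations \<open>V k - A $ k \<bullet> s\<close>
  (estimates against true payoffs), \<open>G - P\<close> (gains against their estimates) and \<open>Q\<close>.\<close>

definition aug_potential :: "real^'d::finite^'n::finite \<Rightarrow> real \<Rightarrow> nat \<Rightarrow> ('d, 'n) aug_state \<Rightarrow> real"
where
  "aug_potential A \<eta> T z = payoff_deviation_term A \<eta> z + real CARD('n) * gain_deviation_term \<eta> z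
     + real CARD('n) / 10 * second_moment_term T z"

lemma payoff_deviation_term_step_le:
  fixes A :: "real^'d::finite^'n::finite"
  assumes "0 < \<eta>" "\<eta> \<le> 1/70" "\<forall>k. norm (A $ k) \<le> 1"
  shows "(\<Sum>i\<in>UNIV. pmf (row_dist w) i * (\<Sum>j\<in>UNIV. pmf (col_dist (ball_proj y)) j *
            payoff_deviation_term A \<eta> (aug_update A \<eta> T ((y, w, s), t, V, P, Q, G) i j)))
         \<le> payoff_deviation_term A \<eta> ((y, w, s), t, V, P, Q, G)"
proof -
  define x where "x = ball_proj y"
  define B where "B k = 7 * \<eta> * (V k - A $ k \<bullet> s) - potential_drift \<eta> * real t" for k
  define X where "X k (i::'n) j = 7 * \<eta> * (estimate A \<eta> x j k - A $ k \<bullet> x)" for k i j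
  have "payoff_deviation_term A \<eta> (aug_update A \<eta> T ((y, w, s), t, V, P, Q, G) i j)
      = (\<Sum>k\<in>UNIV. exp (B k + X k i j - potential_drift \<eta>))" for i j
    unfolding payoff_deviation_term_def aug_update_def Let_def B_def X_def x_def
    by (simp add: inner_add_right algebra_simps)
  then have "(\<Sum>i\<in>UNIV. pmf (row_dist w) i * (\<Sum>j\<in>UNIV. pmf (col_dist x) j *
        payoff_deviation_term A \<eta> (aug_update A \<eta> T ((y, w, s), t, V, P, Q, G) i j)))
      = (\<Sum>k\<in>UNIV. \<Sum>i\<in>UNIV. pmf (row_dist w) i * (\<Sum>j\<in>UNIV. pmf (col_dist x) j *
          exp (B k + X k i j - potential_drift \<eta>)))"
    by (simp add: sum_mult_sum_sum)
  also have "\<dots> \<le> (\<Sum>k\<in>UNIV. exp (B k))"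
  proof (intro sum_mono sum_mult_sum_exp_shift_le)
    show "(\<Sum>i\<in>UNIV. pmf (row_dist w) i * (\<Sum>j\<in>UNIV. pmf (col_dist x) j * exp (X k i j)))
        \<le> exp (potential_drift \<eta>)" for k
      using estimate_deviation_exp_mean_le[OF assms(1,2) norm_ball_proj_le, of A k y] assms(3)
      unfolding X_def x_def by (simp flip: sum_distrib_right)
  qed
  also have "\<dots> = payoff_deviation_term A \<eta> ((y, w, s), t, V, P, Q, G)"
    unfolding payoff_deviation_term_def B_def by simp
  finally show ?thesis unfolding x_def .
qed

lemma gain_deviation_term_step_le:
  fixes A :: "real^'d::finite^'n::finite"
  assumes "0 < \<eta>" "\<eta> \<le> 1/70" "\<forall>k. norm (A $ k) \<le> 1"
  shows "(\<Sum>i\<in>UNIV. pmf (row_dist w) i * (\<Sum>j\<in>UNIV. pmf (col_dist (ball_proj y)) j *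
            gain_deviation_term \<eta> (aug_update A \<eta> T ((y, w, s), t, V, P, Q, G) i j)))
         \<le> gain_deviation_term \<eta> ((y, w, s), t, V, P, Q, G)"
proof -
  define x where "x = ball_proj y"
  define B where "B = 7 * \<eta> * (G - P) - potential_drift \<eta> * real t"
  define X where "X i j = 7 * \<eta> * (A $ i \<bullet> x - (\<Sum>k\<in>UNIV. pmf (row_dist w) k * estimate A \<eta> x j k))"
    for i j
  have "gain_deviation_term \<eta> (aug_update A \<eta> T ((y, w, s), t, V, P, Q, G) i j)
      = exp (B + X i j - potential_drift \<eta>)" for i j
    unfolding gain_deviation_term_def aug_update_def Let_def B_def X_def x_def
    by (simp add: algebra_simps)
  moreover have "(\<Sum>i\<in>UNIV. pmf (row_dist w) i * (\<Sum>j\<in>UNIV. pmf (col_dist x) j *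
      exp (B + X i j - potential_drift \<eta>))) \<le> exp B"
    unfolding X_def x_def
    by (rule sum_mult_sum_exp_shift_le[OF expected_estimate_deviation_exp_mean_le[OF assms(1,2)
          norm_ball_proj_le assms(3)]])
  ultimately show ?thesis unfolding gain_deviation_term_def B_def x_def by simp
qed

lemma second_moment_term_step_le:
  fixes A :: "real^'d::finite^'n::finite"
  assumes "0 < \<eta>" "\<forall>k. norm (A $ k) \<le> 1" "t < T"
  shows "(\<Sum>i\<in>UNIV. pmf (row_dist w) i * (\<Sum>j\<in>UNIV. pmf (col_dist (ball_proj y)) j *
            second_moment_term T (aug_update A \<eta> T ((y, w, s), t, V, P, Q, G) i j)))
         \<le> second_moment_term T ((y, w, s), t, V, P, Q, G)"
proof -
  define D where "D j = (\<Sum>k\<in>UNIV. pmf (row_dist w) k * (estimate A \<eta> (ball_proj y) j k)\<^sup>2)" for j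
  have T: "0 < real T" using assms(3) by simp
  have "second_moment_term T (aug_update A \<eta> T ((y, w, s), t, V, P, Q, G) i j)
      = (Q + real T - real (Suc t)) / real T + D j / real T" for i j
    unfolding second_moment_term_def aug_update_def Let_def D_def using T by (simp add: field_simps)
  then have "(\<Sum>i\<in>UNIV. pmf (row_dist w) i * (\<Sum>j\<in>UNIV. pmf (col_dist (ball_proj y)) j *
            second_moment_term T (aug_update A \<eta> T ((y, w, s), t, V, P, Q, G) i j)))
      = (Q + real T - real (Suc t)) / real T + (\<Sum>j\<in>UNIV. pmf (col_dist (ball_proj y)) j * D j) / real T"
    by (simp add: sum_mult_sum_const_add sum_divide_distrib)
  also have "\<dots> \<le> (Q + real T - real (Suc t)) / real T + 1 / real T"
    using expected_estimate_second_moment_le[OF assms(1) norm_ball_proj_le assms(2)] T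
    unfolding D_def by (intro add_left_mono divide_right_mono) auto
  also have "\<dots> = second_moment_term T ((y, w, s), t, V, P, Q, G)"
    unfolding second_moment_term_def using T by (simp add: field_simps)
  finally show ?thesis .
qed

lemma aug_potential_step_le:
  fixes A :: "real^'d::finite^'n::finite"
  assumes "0 < \<eta>" "\<eta> \<le> 1/70" "\<forall>k. norm (A $ k) \<le> 1" "t < T"
  shows "(\<Sum>i\<in>UNIV. pmf (row_dist w) i * (\<Sum>j\<in>UNIV. pmf (col_dist (ball_proj y)) j *
            aug_potential A \<eta> T (aug_update A \<eta> T ((y, w, s), t, V, P, Q, G) i j)))
         \<le> aug_potential A \<eta> T ((y, w, s), t, V, P, Q, G)"
  unfolding aug_potential_def sum_mult_sum_add sum_mult_sum_cmult
  using payoff_deviation_term_step_le[OF assms(1-3)] gain_deviation_term_step_le[OF assms(1-3)]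
    second_moment_term_step_le[OF assms(1,3,4)]
  by (intro add_mono mult_left_mono) auto

lemma aug_potential_nonneg:
  assumes "aug_invariant A \<eta> T k z" "k \<le> T"
  shows "0 \<le> aug_potential A \<eta> T z"
proof -
  obtain y w s t V P Q G where z: "z = ((y, w, s), t, V, P, Q, G)" by (metis prod.exhaust)
  have "t = k" "0 \<le> Q" using assms(1) unfolding z aug_invariant_def by auto
  then have "0 \<le> (Q + real T - real t) / real T" using assms(2) by simp
  then show ?thesis unfolding z aug_potential_def payoff_deviation_term_def gain_deviation_term_def second_moment_term_def prod.case
    by (intro add_nonneg_nonneg sum_nonneg mult_nonneg_nonneg) auto
qed

lemma nn_integral_aug_step_potential_le:
  fixes A :: "real^'d::finite^'n::finite"
  assumes "0 < \<eta>" "\<eta> \<le> 1/70" "\<forall>k. norm (A $ k) \<le> 1" "aug_invariant A \<eta> T k z" "k < T"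
  shows "(\<integral>\<^sup>+z'. aug_potential A \<eta> T z' \<partial>aug_step A \<eta> T z) \<le> aug_potential A \<eta> T z"
proof -
  obtain y w s t V P Q G where z: "z = ((y, w, s), t, V, P, Q, G)" by (metis prod.exhaust)
  have t: "t = k" using assms(4) unfolding z aug_invariant_def by auto
  have "0 \<le> aug_potential A \<eta> T (aug_update A \<eta> T z i j)" for i j
    using aug_potential_nonneg[OF aug_invariant_step[OF assms(1,3,4)]] assms(5) by simp
  then have "(\<integral>\<^sup>+z'. aug_potential A \<eta> T z' \<partial>aug_step A \<eta> T z)
      = ennreal (\<Sum>i\<in>UNIV. pmf (row_dist w) i * (\<Sum>j\<in>UNIV. pmf (col_dist (ball_proj y)) j *
          aug_potential A \<eta> T (aug_update A \<eta> T z i j)))"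
    unfolding nn_integral_aug_step by (simp add: z sum_ennreal_mult_sum_ennreal)
  also have "\<dots> \<le> aug_potential A \<eta> T z"
    using aug_potential_step_le[OF assms(1-3), of t] assms(5) unfolding z t by (simp add: ennreal_leI)
  finally show ?thesis .
qed

definition aug_chain :: "real^'d::finite^'n::finite \<Rightarrow> real \<Rightarrow> nat \<Rightarrow> ('d, 'n) aug_state pmf" where
  "aug_chain A \<eta> T = ((\<lambda>p. bind_pmf p (aug_step A \<eta> T)) ^^ T) (return_pmf aug_init)"

lemma sublinear_perceptron_eq_map_aug_chain:
  "sublinear_perceptron \<epsilon> A =
     map_pmf (\<lambda>z. (1 / real (perc_T \<epsilon> CARD('n))) *\<^sub>R snd (snd (fst z)))
       (aug_chain A (perc_eta \<epsilon> CARD('n)) (perc_T \<epsilon> CARD('n)))"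
  for A :: "real^'d::finite^'n::finite"
proof -
  have "map_pmf fst (aug_chain A \<eta> T)
      = ((\<lambda>p. bind_pmf p (perc_step A \<eta> T)) ^^ T) (return_pmf (0, \<lambda>_. 1, 0))" for \<eta> T
    unfolding aug_chain_def by (subst map_pmf_iterate_bind_pmf) (auto simp: map_fst_aug_step aug_init_def)
  from this[symmetric] show ?thesis
    unfolding sublinear_perceptron_def Let_def by (simp add: map_pmf_comp)
qed

lemma aug_invariant_aug_chain:
  assumes "0 < \<eta>" "\<forall>k. norm (A $ k) \<le> 1" "z \<in> set_pmf (aug_chain A \<eta> T)"
  shows "aug_invariant A \<eta> T T z"
proof (rule iterate_bind_pmf_invariant[where I = "aug_invariant A \<eta> T" and N = T])
  show "aug_invariant A \<eta> T 0 z" if "z \<in> set_pmf (return_pmf aug_init)" for z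
    using that by (simp add: aug_invariant_init)
  show "aug_invariant A \<eta> T (Suc k) z'"
    if "aug_invariant A \<eta> T k z" "z' \<in> set_pmf (aug_step A \<eta> T z)" for k z z'
    using that aug_invariant_step[OF assms(1,2)] by (blast dest: set_pmf_aug_step)
qed (use assms(3) in \<open>simp_all add: aug_chain_def\<close>)

lemma nn_integral_aug_chain_potential_le:
  fixes A :: "real^'d::finite^'n::finite"
  assumes "0 < \<eta>" "\<eta> \<le> 1/70" "\<forall>k. norm (A $ k) \<le> 1" "0 < T"
  shows "(\<integral>\<^sup>+z. aug_potential A \<eta> T z \<partial>aug_chain A \<eta> T) \<le> 21/10 * real CARD('n)"
proof -
  have "(\<integral>\<^sup>+z. aug_potential A \<eta> T z \<partial>aug_chain A \<eta> T)
      \<le> (\<integral>\<^sup>+z. aug_potential A \<eta> T z \<partial>return_pmf aug_init)"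
    unfolding aug_chain_def
    by (rule nn_integral_iterate_bind_pmf_le[where I = "aug_invariant A \<eta> T" and N = T])
      (auto simp: aug_invariant_init dest!: set_pmf_aug_step
        intro: aug_invariant_step[OF assms(1,3)] nn_integral_aug_step_potential_le[OF assms(1-3)])
  also have "\<dots> = 21/10 * real CARD('n)"
    using assms(4) by (simp add: aug_init_def aug_potential_def payoff_deviation_term_def gain_deviation_term_def second_moment_term_def)
  finally show ?thesis .
qed

lemma prob_aug_chain_potential_low:
  fixes A :: "real^'d::finite^'n::finite"
  assumes "0 < \<eta>" "\<eta> \<le> 1/70" "\<forall>k. norm (A $ k) \<le> 1" "0 < T"
  shows "1/2 \<le> measure_pmf.prob (aug_chain A \<eta> T) {z. aug_potential A \<eta> T z < 42/10 * real CARD('n)}"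
proof -
  let ?M = "aug_chain A \<eta> T" and ?F = "aug_potential A \<eta> T" and ?c = "42/10 * real CARD('n)"
  have "measure_pmf.prob ?M {z. ?c \<le> ?F z} \<le> (21/10 * real CARD('n)) / ?c"
    by (rule measure_pmf_Markov_inequality[OF nn_integral_aug_chain_potential_le[OF assms]]) auto
  moreover have "{z. ?F z < ?c} = space ?M - {z. ?c \<le> ?F z}" by auto
  ultimately show ?thesis using measure_pmf.prob_compl[of "{z. ?c \<le> ?F z}" ?M] by simp
qed

section \<open>From a low potential to an approximate solution\<close>

lemma Min_inner_rows_le_1:
  fixes A :: "real^'d::finite^'n::finite"
  assumes "\<forall>i. norm (A $ i) \<le> 1" "norm x \<le> 1"
  shows "Min (range (\<lambda>i. A $ i \<bullet> x)) \<le> 1"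
proof -
  obtain i :: 'n where True by simp
  have "Min (range (\<lambda>i. A $ i \<bullet> x)) \<le> A $ i \<bullet> x" by (rule Min_le) auto
  also have "\<dots> \<le> 1" using abs_inner_le_1[of "A $ i" x] assms by simp
  finally show ?thesis .
qed

lemma perc_value_le_1:
  assumes "\<forall>i. norm (A $ i) \<le> 1" shows "perc_value A \<le> 1"
  unfolding perc_value_def using Min_inner_rows_le_1[OF assms] by (intro cSUP_least) auto

lemma perc_value_approx:
  fixes A :: "real^'d::finite^'n::finite"
  assumes "\<forall>i. norm (A $ i) \<le> 1" "0 < \<delta>"
  obtains u where "norm u \<le> 1" "\<forall>i. perc_value A - \<delta> \<le> A $ i \<bullet> u"
proof -
  have "bdd_above ((\<lambda>x. Min (range (\<lambda>i. A $ i \<bullet> x))) ` cball 0 1)"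
    using Min_inner_rows_le_1[OF assms(1)] by (intro bdd_aboveI[where M = 1]) auto
  moreover have "perc_value A - \<delta> < perc_value A" using assms by simp
  ultimately obtain u where u: "norm u \<le> 1" "perc_value A - \<delta> < Min (range (\<lambda>i. A $ i \<bullet> u))"
    unfolding perc_value_def by (subst (asm) less_cSUP_iff) auto
  moreover have "Min (range (\<lambda>i. A $ i \<bullet> u)) \<le> A $ i \<bullet> u" for i by (rule Min_le) auto
  ultimately show ?thesis using that by (meson less_imp_le order_trans)
qed

lemma eps_approx_solution_if_ge_2:
  fixes A :: "real^'d::finite^'n::finite"
  assumes "2 \<le> \<epsilon>" "\<forall>i. norm (A $ i) \<le> 1" "norm x \<le> 1"
  shows "eps_approx_solution \<epsilon> A x"
proof -
  have "perc_value A - \<epsilon> \<le> A $ i \<bullet> x" for i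
    using abs_inner_le_1[of "A $ i" x] perc_value_le_1[OF assms(2)] assms by (simp add: abs_le_iff)
  then show ?thesis using assms(3) by (simp add: eps_approx_solution_def)
qed

lemma ln_42_div_10_le: "ln (42/10::real) \<le> 21/10 * ln 2"
proof -
  have "10 * ln (42/10::real) = ln ((42/10)^10)" by (simp add: ln_realpow)
  also have "\<dots> \<le> ln ((2::real)^21)" by (subst ln_le_cancel_iff) (auto simp: power_divide)
  also have "\<dots> = 21 * ln 2" by (metis ln_realpow of_nat_numeral)
  finally show ?thesis by simp
qed

lemma ln_2_ge_half: "1/2 \<le> ln (2::real)"
  using exp_half_le2 by (subst ln_ge_iff) auto

lemma perc_parameters:
  assumes "0 < \<epsilon>" "2 \<le> n"
  defines "T \<equiv> real (perc_T \<epsilon> n)" and "\<eta> \<equiv> perc_eta \<epsilon> n"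
  shows "0 < T" "0 < \<eta>" "\<eta> \<le> \<epsilon> / 20000" "2 * ln (real n) / \<epsilon> \<le> \<eta> * T"
    "sqrt (2 * T) \<le> \<epsilon> * T / 100"
proof -
  define L where "L = ln (real n)"
  have "ln 2 \<le> L" unfolding L_def using assms(2) by (subst ln_le_cancel_iff) auto
  then have L: "1/2 \<le> L" using ln_2_ge_half by linarith
  have "200\<^sup>2 * \<epsilon> powr (-2) * L \<le> T" unfolding T_def perc_T_def L_def by (rule real_nat_ceiling_ge)
  moreover have "\<epsilon> powr (-2) = 1 / \<epsilon>\<^sup>2" using assms(1) by (simp add: powr_minus divide_inverse)
  ultimately have "40000 * L / \<epsilon>\<^sup>2 \<le> T" by simp
  then have eT: "40000 * L \<le> \<epsilon>\<^sup>2 * T" using assms(1) by (simp add: pos_divide_le_eq mult.commute)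
  then have "0 < \<epsilon>\<^sup>2 * T" using L by linarith
  then show T: "0 < T" using assms(1) by (simp add: zero_less_mult_iff)
  have \<eta>: "\<eta> = 1/100 * sqrt (L / T)" unfolding \<eta>_def perc_eta_def L_def T_def ..
  show "0 < \<eta>" unfolding \<eta> using L T by simp
  have "L / T \<le> (\<epsilon>/200)\<^sup>2" using eT T by (simp add: divide_le_eq power_divide field_simps)
  then have "sqrt (L / T) \<le> \<epsilon>/200" using assms(1) by (intro real_le_lsqrt) auto
  then show "\<eta> \<le> \<epsilon> / 20000" unfolding \<eta> by simp
  have "(200 * L / \<epsilon>)\<^sup>2 = L * (40000 * L) / \<epsilon>\<^sup>2" by (simp add: power2_eq_square power_divide)
  also have "\<dots> \<le> L * (\<epsilon>\<^sup>2 * T) / \<epsilon>\<^sup>2" using eT L by (intro divide_right_mono mult_left_mono) auto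
  also have "\<dots> = L * T" using assms(1) by simp
  finally have "200 * L / \<epsilon> \<le> sqrt (L * T)" by (rule real_le_rsqrt)
  moreover have "sqrt (L / T) * T = sqrt (L * T)"
  proof -
    have "sqrt (L / T) * T = sqrt (L / T) * sqrt (T\<^sup>2)" using T by simp
    also have "\<dots> = sqrt (L / T * T\<^sup>2)" by (rule real_sqrt_mult[symmetric])
    also have "L / T * T\<^sup>2 = L * T" using T by (simp add: power2_eq_square)
    finally show ?thesis .
  qed
  ultimately show "2 * ln (real n) / \<epsilon> \<le> \<eta> * T"
    unfolding \<eta> L_def[symmetric] by (simp add: field_simps)
  have "20000 \<le> \<epsilon>\<^sup>2 * T" using eT L by linarith
  then have "20000 * T \<le> \<epsilon>\<^sup>2 * T * T" using T by (intro mult_right_mono) auto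
  then have "2 * T \<le> (\<epsilon> * T / 100)\<^sup>2" by (simp add: power2_eq_square field_simps)
  then show "sqrt (2 * T) \<le> \<epsilon> * T / 100" using assms(1) T by (intro real_le_lsqrt) auto
qed

lemma weights_regret_bound:
  fixes A :: "real^'d::finite^'n::finite"
  assumes "aug_invariant A \<eta> T k ((y, w, s), t, V, P, Q, G)" "0 < \<eta>"
  shows "P - \<eta> * Q - ln (real CARD('n)) / \<eta> \<le> V i"
proof -
  have w: "\<forall>i. 0 < w i" and W: "(\<Sum>i\<in>UNIV. w i) \<le> real CARD('n) * exp (- \<eta> * P + \<eta>\<^sup>2 * Q)"
    and wV: "exp (- \<eta> * V i) \<le> w i"
    using assms(1) unfolding aug_invariant_def by auto
  have "w i \<le> (\<Sum>i\<in>UNIV. w i)" using w by (intro member_le_sum) (auto simp: less_imp_le)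
  then have "exp (- \<eta> * V i) \<le> exp (ln (real CARD('n)) + (- \<eta> * P + \<eta>\<^sup>2 * Q))"
    using wV W by (simp add: exp_add)
  then have "\<eta> * (P - \<eta> * Q - V i) \<le> ln (real CARD('n))"
    by (simp add: algebra_simps power2_eq_square)
  then have "P - \<eta> * Q - V i \<le> ln (real CARD('n)) / \<eta>"
    using assms(2) by (simp add: pos_le_divide_eq mult.commute)
  then show ?thesis by linarith
qed

lemma gains_lower_bound:
  fixes A :: "real^'d::finite^'n::finite"
  assumes "aug_invariant A \<eta> T T ((y, w, s), t, V, P, Q, G)" "0 < T"
    and "norm u \<le> 1" "\<forall>i. m \<le> A $ i \<bullet> u"
  shows "real T * m \<le> G + sqrt (2 * real T)"
proof -
  define r where "r = sqrt (2 * real T)"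
  have r: "0 < r" "r\<^sup>2 = 2 * real T" unfolding r_def using assms(2) by simp_all
  have "(1 / r) * real T * m \<le> y \<bullet> u" "huber y \<le> (1 / r) * G + (1 / r)\<^sup>2 * real T"
    using assms(1,4) unfolding aug_invariant_def r_def by auto
  moreover have "y \<bullet> u \<le> huber y + 1/2"
    using inner_minus_half_sq_le_huber[OF assms(3), of y] power_le_one[OF norm_ge_zero assms(3), of 2]
    by linarith
  ultimately have "(1 / r) * real T * m \<le> (1 / r) * G + (1 / r)\<^sup>2 * real T + 1/2" by linarith
  then have "real T * m \<le> G + real T / r + r / 2" using r by (simp add: field_simps power2_eq_square)
  also have "real T / r = r / 2" using r by (simp add: field_simps flip: power2_eq_square)
  finally show ?thesis unfolding r_def by simp
qed

lemma low_potential_bounds: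
  fixes A :: "real^'d::finite^'n::finite"
  assumes "aug_potential A \<eta> T ((y, w, s), T, V, P, Q, G) < 42/10 * real CARD('n)"
    and "0 \<le> Q" "0 < T" "2 \<le> CARD('n)"
  shows "Q < 42 * real T"
    and "7 * \<eta> * (G - P) - potential_drift \<eta> * real T < 21/10 * ln (real CARD('n))"
    and "7 * \<eta> * (V k - A $ k \<bullet> s) - potential_drift \<eta> * real T < 31/10 * ln (real CARD('n))"
proof -
  define N where "N = real CARD('n)"
  define X where "X k = 7 * \<eta> * (V k - A $ k \<bullet> s) - potential_drift \<eta> * real T" for k
  define Y where "Y = 7 * \<eta> * (G - P) - potential_drift \<eta> * real T"
  have N: "2 \<le> N" unfolding N_def using assms(4) by simp
  have "ln 2 \<le> ln N" using N by (subst ln_le_cancel_iff) auto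
  then have ln42: "ln (42/10) \<le> 21/10 * ln N" using ln_42_div_10_le by linarith
  have sum: "(\<Sum>k\<in>UNIV. exp (X k)) + N * exp Y + N / 10 * (Q / real T) < 42/10 * N"
    using assms(1) unfolding aug_potential_def payoff_deviation_term_def gain_deviation_term_def second_moment_term_def X_def Y_def N_def by simp
  have "0 \<le> (\<Sum>k\<in>UNIV. exp (X k))" "0 \<le> N * exp Y" "0 \<le> N / 10 * (Q / real T)"
    using assms(2,3) N by (simp_all add: sum_nonneg)
  moreover have "exp (X k) \<le> (\<Sum>k\<in>UNIV. exp (X k))" by (rule member_le_sum) auto
  ultimately have Q: "N * (Q / real T) < N * 42" and Y: "N * exp Y < N * (42/10)"
    and X: "exp (X k) < 42/10 * N"
    using sum by linarith+
  have "Q / real T < 42" by (rule mult_left_less_imp_less[OF Q]) (use N in simp)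
  then show "Q < 42 * real T" using assms(3) by (simp add: divide_less_eq)
  have "exp Y < 42/10" by (rule mult_left_less_imp_less[OF Y]) (use N in simp)
  then have "Y < ln (42/10)" using ln_less_cancel_iff[of "exp Y" "42/10"] by simp
  then show "Y < 21/10 * ln N" using ln42 by linarith
  have "X k < ln (42/10 * N)" using X N ln_less_cancel_iff[of "exp (X k)" "42/10 * N"] by simp
  also have "\<dots> = ln (42/10) + ln N" using N ln_mult[of "42/10" N] by simp
  finally show "X k < 31/10 * ln N" using ln42 by linarith
qed

lemma approx_margin_arith:
  fixes \<eta> T \<epsilon> L V As G P Q m \<sigma> :: real
  assumes "0 < \<eta>" "0 < T" "0 < \<epsilon>"
    and dev_V: "7 * \<eta> * (V - As) - potential_drift \<eta> * T < 31/10 * L"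
    and dev_G: "7 * \<eta> * (G - P) - potential_drift \<eta> * T < 21/10 * L"
    and Q: "Q < 42 * T" and mw: "P - \<eta> * Q - L / \<eta> \<le> V" and gd: "T * m \<le> G + sqrt (2 * T)"
    and "\<eta> \<le> \<epsilon> / 20000" "2 * L / \<epsilon> \<le> \<eta> * T" "sqrt (2 * T) \<le> \<epsilon> * T / 100"
    and "\<sigma> - \<epsilon> / 50 \<le> m"
  shows "T * (\<sigma> - \<epsilon>) \<le> As"
proof -
  define B where "B = L / \<eta>"
  have drift: "potential_drift \<eta> * T = 7 * \<eta> * (701 * \<eta> * T)"
    by (simp add: potential_drift_def power2_eq_square algebra_simps)
  have "7 * \<eta> * (V - As - 701 * \<eta> * T) < 7 * \<eta> * (31/70 * B)"
    using dev_V assms(1) unfolding drift B_def by (simp add: algebra_simps)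
  then have V: "V - As < 31/70 * B + 701 * \<eta> * T" using assms(1) by simp
  have "7 * \<eta> * (G - P - 701 * \<eta> * T) < 7 * \<eta> * (21/70 * B)"
    using dev_G assms(1) unfolding drift B_def by (simp add: algebra_simps)
  then have G: "G - P < 21/70 * B + 701 * \<eta> * T" using assms(1) by simp
  have "2 * L \<le> \<epsilon> * (\<eta> * T)" using assms(3,10) by (simp add: pos_divide_le_eq mult.commute)
  then have "B \<le> \<epsilon> * T / 2" unfolding B_def using assms(1) by (simp add: pos_divide_le_eq algebra_simps)
  moreover have "\<eta> * Q \<le> 42 * (\<eta> * T)" using Q assms(1) by simp
  moreover have "\<eta> * T \<le> \<epsilon> * T / 20000" using assms(2,9) by (simp add: mult_right_mono divide_right_mono)
  moreover have "T * (\<sigma> - \<epsilon>/50) \<le> T * m" using assms(2,12) by (simp add: mult_left_mono)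
  ultimately have "T * (\<sigma> - \<epsilon>) + \<epsilon> * T * (1 - 1/100 - 61/70 - 1444/20000 - 1/50) < As"
    using V G mw gd assms(11) unfolding B_def[symmetric] by (simp add: algebra_simps)
  moreover have "0 \<le> \<epsilon> * T * (1 - 1/100 - 61/70 - 1444/20000 - 1/50)" using assms(2,3) by simp
  ultimately show ?thesis by linarith
qed

lemma norm_aug_output_le_1:
  assumes "aug_invariant A \<eta> T T z" "0 < T"
  shows "norm ((1 / real T) *\<^sub>R snd (snd (fst z))) \<le> 1"
proof -
  obtain y w s t V P Q G where z: "z = ((y, w, s), t, V, P, Q, G)" by (metis prod.exhaust)
  have "norm s \<le> real T" using assms(1) unfolding z aug_invariant_def by auto
  then show ?thesis using assms(2) unfolding z by (simp add: field_simps)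
qed

lemma eps_approx_solution_of_low_potential:
  fixes A :: "real^'d::finite^'n::finite"
  assumes "0 < \<epsilon>" "2 \<le> CARD('n)" "\<forall>i. norm (A $ i) \<le> 1"
  defines "T \<equiv> perc_T \<epsilon> CARD('n)" and "\<eta> \<equiv> perc_eta \<epsilon> CARD('n)"
  assumes "aug_invariant A \<eta> T T z" "aug_potential A \<eta> T z < 42/10 * real CARD('n)"
  shows "eps_approx_solution \<epsilon> A ((1 / real T) *\<^sub>R snd (snd (fst z)))"
proof -
  obtain y w s t V P Q G where z: "z = ((y, w, s), t, V, P, Q, G)" by (metis prod.exhaust)
  note par = perc_parameters[OF assms(1,2), folded T_def \<eta>_def]
  have T: "0 < T" using par(1) by simp
  have t: "t = T" and Q: "0 \<le> Q" using assms(6) unfolding z aug_invariant_def by auto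
  note low = low_potential_bounds[OF assms(7)[unfolded z t] Q T assms(2)]
  obtain u where u: "norm u \<le> 1" "\<forall>i. perc_value A - \<epsilon>/50 \<le> A $ i \<bullet> u"
    using perc_value_approx[OF assms(3)] assms(1) by (metis divide_pos_pos zero_less_numeral)
  have "real T * (perc_value A - \<epsilon>) \<le> A $ i \<bullet> s" for i
  proof (rule approx_margin_arith)
    show "P - \<eta> * Q - ln (real CARD('n)) / \<eta> \<le> V i"
      using weights_regret_bound assms(6) par(2) unfolding z by blast
    show "real T * (perc_value A - \<epsilon>/50) \<le> G + sqrt (2 * real T)"
      using gains_lower_bound[OF assms(6)[unfolded z] T u(1)] u(2) by blast
  qed (use par low assms(1) in auto)
  moreover have "norm ((1 / real T) *\<^sub>R s) \<le> 1"
    using norm_aug_output_le_1[OF assms(6) T] unfolding z by simp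
  ultimately show ?thesis
    unfolding eps_approx_solution_def z using T by (simp add: field_simps)
qed

theorem mainTheorem2:
  fixes A :: "real^'d::finite^'n::finite" and \<epsilon> :: real
  assumes "\<epsilon> > 0"
    and "CARD('n) \<ge> 2"
    and "\<forall>i. norm (A $ i) \<le> 1"
  shows "measure_pmf.prob (sublinear_perceptron \<epsilon> A) {x. eps_approx_solution \<epsilon> A x} \<ge> 1/2"
proof -
  define T where "T = perc_T \<epsilon> CARD('n)"
  define \<eta> where "\<eta> = perc_eta \<epsilon> CARD('n)"
  define M where "M = aug_chain A \<eta> T"
  define out where "out z = (1 / real T) *\<^sub>R snd (snd (fst z))" for z :: "('d, 'n) aug_state"
  define certified where "certified =
    (if 2 \<le> \<epsilon> then UNIV else {z. aug_potential A \<eta> T z < 42/10 * real CARD('n)})"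
  note par = perc_parameters[OF assms(1,2), folded T_def \<eta>_def]
  have "1/2 \<le> measure_pmf.prob M certified"
    using prob_aug_chain_potential_low[OF par(2) _ assms(3), of T] par(1,3)
    unfolding certified_def M_def by auto
  also have "\<dots> \<le> measure_pmf.prob M (out -` {x. eps_approx_solution \<epsilon> A x})"
  proof (rule measure_pmf_prob_mono_on_support)
    fix z assume "z \<in> set_pmf M" "z \<in> certified"
    moreover from \<open>z \<in> set_pmf M\<close> have inv: "aug_invariant A \<eta> T T z"
      unfolding M_def by (rule aug_invariant_aug_chain[OF par(2) assms(3)])
    ultimately show "z \<in> out -` {x. eps_approx_solution \<epsilon> A x}"
      using eps_approx_solution_if_ge_2[OF _ assms(3) norm_aug_output_le_1[OF inv]]
        eps_approx_solution_of_low_potential[OF assms, folded T_def \<eta>_def, OF inv] par(1)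
      unfolding certified_def out_def by (auto split: if_splits)
  qed
  finally show ?thesis
    unfolding sublinear_perceptron_eq_map_aug_chain T_def[symmetric] \<eta>_def[symmetric] M_def out_def
    by simp
qed

end
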